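(* Consider a mean-variance team stochastic game as described in the context, and let $\tilde{\boldsymbol{\mu}}$ and the sets $\mathcal{D}_1^{\tilde{\boldsymbol{\mu}}},\dots,\mathcal{D}_N^{\tilde{\boldsymbol{\mu}}}$ be the output of Algorithm Modified MV-MAPI (described in the context). Let $\mathcal{D}^{\tilde{\boldsymbol{\mu}}}=\{(\mu_i,\tilde{\boldsymbol{\mu}}_{-i}):i\in\mathcal{N},\ \mu_i\in\mathcal{D}_i^{\tilde{\boldsymbol{\mu}}}\}$ and $\widetilde{\mathcal{D}}=\mathcal{D}\setminus\mathcal{D}^{\tilde{\boldsymbol{\mu}}}$. Then: (1) $J(\tilde{\boldsymbol{\mu}})=J(\boldsymbol{\mu})$ for all $\boldsymbol{\mu}\in\mathcal{D}^{\tilde{\boldsymbol{\mu}}}$, and $\widetilde{\mathcal{D}}$ is a valid pruned joint policy space, i.e. $\widetilde{\mathcal{D}}$ contains a joint policy $\boldsymbol{\mu}^*$ with $J(\boldsymbol{\mu}^* )=\max_{\boldsymbol{\mu}\in\mathcal{U}}J(\boldsymbol{\mu})$. (2) $\tilde{\boldsymbol{\mu}}$ is a strict local Nash equilibrium in the mixed joint policy space induced by $\widetilde{\mathcal{D}}$: there exists $\bar\delta\in(0,1]$ such that for all $\delta\in(0,\bar\delta]$, every agent $i\in\mathcal{N}$ and every deterministic policy $\mu_i\neq\tilde\mu_i$ of agent $i$ with $(\mu_i,\tilde{\boldsymbol{\mu}}_{-i})\in\widetilde{\mathcal{D}}$, we have $J(\tilde{\boldsymbol{\mu}})>J((1-\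delta)\tilde\mu_i+\delta\mu_i,\tilde{\boldsymbol{\mu}}_{-i})$.
   Context: Game: finite agents $\mathcal{N}=\{1,\dots,N\}$, finite state space $\mathcal{S}$, finite action sets $\mathcal{A}_i$, $\mathcal{A}=\prod_i\mathcal{A}_i$, transition kernel $P(s'|s,\boldsymbol{a})$, common reward $r:\mathcal{S}\times\mathcal{A}\to\mathbb{R}$. Policies $\mu_i:\mathcal{S}\to\Delta(\mathcal{A}_i)$ (set $\mathcal{U}_i$; deterministic policies are maps $\mathcal{S}\to\mathcal{A}_i$); joint policies $\boldsymbol{\mu}\in\mathcal{U}=\prod_i\mathcal{U}_i$ with $\boldsymbol{\mu}(\boldsymbol{a}|s)=\prod_i\mu_i(a_i|s)$; $\mathcal{D}$ is the set of deterministic joint policies; $(\mu_i,\boldsymbol{\mu}_{-i})$ means agent $i$ uses $\mu_i$, others use $\boldsymbol{\mu}_{-i}$; $(1-\delta)\tilde\mu_i+\delta\mu_i$ is the policy $s\mapsto(1-\delta)\tilde\mu_i(\cdot|s)+\delta\mu_i(\cdot|s)$. Standing assumption: the chain $P^{\boldsymbol{\mu}}(s'|s)=\sum_{\boldsymbol{a}}\boldsymbol{\mu}(\boldsymbol{a}|s)P(s'|s,\boldsymbol{a})$ is ergodic for every $\boldsymbol{\mu}\in\mathcal{U}$, stationary distribution $\pi^{\boldsymbol{\mu}}$. $\eta(\boldsymbol{\mu})=\sum_s\pi^{\boldsymbol{\mu}}(s)\sum_{\boldsymbol{a}}\boldsymbol{\mu}(\boldsymbol{a}|s)r(s,\boldsymbol{a})$;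 $\zeta(\boldsymbol{\mu})=\sum_s\pi^{\boldsymbol{\mu}}(s)\sum_{\boldsymbol{a}}\boldsymbol{\mu}(\boldsymbol{a}|s)(r(s,\boldsymbol{a})-\eta(\boldsymbol{\mu}))^2$; for fixed $\beta\ge0$, $J(\boldsymbol{\mu})=\eta(\boldsymbol{\mu})-\beta\zeta(\boldsymbol{\mu})$. $f^{\boldsymbol{\mu}}(s,\boldsymbol{a})=r(s,\boldsymbol{a})-\beta(r(s,\boldsymbol{a})-\eta(\boldsymbol{\mu}))^2$, $f^{\boldsymbol{\mu}}(s)=\sum_{\boldsymbol{a}}\boldsymbol{\mu}(\boldsymbol{a}|s)f^{\boldsymbol{\mu}}(s,\boldsymbol{a})$; $V_f^{\boldsymbol{\mu}}$ solves $V(s)=f^{\boldsymbol{\mu}}(s)-J(\boldsymbol{\mu})+\sum_{s'}P^{\boldsymbol{\mu}}(s'|s)V(s')$ (unique up to an additive constant); $Q_f^{\boldsymbol{\mu}}(s,\boldsymbol{a})=f^{\boldsymbol{\mu}}(s,\boldsymbol{a})-J(\boldsymbol{\mu})+\sum_{s'}P(s'|s,\boldsymbol{a})V_f^{\boldsymbol{\mu}}(s')$, $A_f^{\boldsymbol{\mu}}=Q_f^{\boldsymbol{\mu}}-V_f^{\boldsymbol{\mu}}$. Algorithm MV-MAPI (from a deterministic initial joint policy $\boldsymbol{\mu}^{(0)}$): for $k=0,1,\dots$: set $\hat{\boldsymbol{\mu}}^{(k,0)}=\boldsymbol{\mu}^{(k)}$, draw a random permutation $i_1,\dots,i_N$;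 for $h=1,\dots,N$, for every $s$ set $\mu^{(k+1)}_{i_h}(s)$ to an action maximizing $\mathbb{E}_{\boldsymbol{a}_{-i_h}\sim\hat{\boldsymbol{\mu}}^{(k,h-1)}_{-i_h}(\cdot|s)}[A_f^{\hat{\boldsymbol{\mu}}^{(k,h-1)}}(s,a_{i_h},\boldsymbol{a}_{-i_h})]$ (keeping $\mu^{(k)}_{i_h}(s)$ if it attains the maximum) and set $\hat{\boldsymbol{\mu}}^{(k,h)}=(\mu^{(k+1)}_{i_1},\dots,\mu^{(k+1)}_{i_h},\mu^{(k)}_{i_{h+1}},\dots,\mu^{(k)}_{i_N})$; if $\mu^{(k+1)}_i=\mu^{(k)}_i$ for all $i$, return $\boldsymbol{\mu}^{(k)}$, else set $\boldsymbol{\mu}^{(k+1)}=\hat{\boldsymbol{\mu}}^{(k,N)}$. Algorithm Modified MV-MAPI: (Step 1) run MV-MAPI and obtain $\tilde{\boldsymbol{\mu}}$. For each $i=1,\dots,N$: let $\mathcal{D}_i^{\tilde{\boldsymbol{\mu}}}$ be the set of deterministic policies $\mu_i\neq\tilde\mu_i$ of agent $i$ such that for every $s$, $\mu_i(s)\in\arg\max_{a_i}\mathbb{E}_{\boldsymbol{a}_{-i}\sim\tilde{\boldsymbol{\mu}}_{-i}(\cdot|s)}[A_f^{\tilde{\boldsymbol{\mu}}}(s,a_i,\boldsymbol{a}_{-i})]$; if some $\mu_i\in\mathcal{D}_i^{\tilde{\boldsymbol{\mu}}}$ satisfies $\eta(\mu_i,\tilde{\boldsymbol{\mu}}_{-i})\neq\eta(\tilde{\boldsymbol{\mu}})$,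 go back to Step 1 running MV-MAPI from the initial joint policy $(\mu_i,\tilde{\boldsymbol{\mu}}_{-i})$. When the loop over $i$ completes without restarting, output $\tilde{\boldsymbol{\mu}}$ and $\mathcal{D}_1^{\tilde{\boldsymbol{\mu}}},\dots,\mathcal{D}_N^{\tilde{\boldsymbol{\mu}}}$. *)

theory Defs
  imports Complex_Main "HOL-Library.FuncSet"
begin

text \<open>Agents: finite type 'i (with a linear order used
for the loop i = 1..N of Modified MV-MAPI); states: finite type 's; action set of agent i:
A i :: 'a set.
A (stochastic) policy of agent i is p :: 's => 'a => real with p s a the probability of a in s.\<close>

definition jacts :: "('i \<Rightarrow> 'a set) \<Rightarrow> ('i \<Rightarrow> 'a) set" where
  "jacts A = Pi\<^sub>E UNIV A"

definition jp :: "('i::finite \<Rightarrow> 's \<Rightarrow> 'a \<Rightarrow> real) \<Rightarrow> 's \<Rightarrow> ('i \<Rightarrow> 'a) \<Rightarrow> real" where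
  "jp mu s a = (\<Prod>i\<in>UNIV. mu i s (a i))"

definition is_policy :: "('i \<Rightarrow> 'a set) \<Rightarrow> 'i \<Rightarrow> ('s \<Rightarrow> 'a \<Rightarrow> real) \<Rightarrow> bool" where
  "is_policy A i p \<longleftrightarrow> (\<forall>s. (\<forall>b. 0 \<le> p s b) \<and> (\<forall>b. b \<notin> A i \<longrightarrow> p s b = 0)
                          \<and> sum (p s) (A i) = 1)"

definition policies :: "('i \<Rightarrow> 'a set) \<Rightarrow> ('i \<Rightarrow> 's \<Rightarrow> 'a \<Rightarrow> real) set" where
  "policies A = {mu. \<forall>i. is_policy A i (mu i)}"

definition det_policy :: "('i \<Rightarrow> 'a set) \<Rightarrow> 'i \<Rightarrow> ('s \<Rightarrow> 'a) \<Rightarrow> bool" where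
  "det_policy A i d \<longleftrightarrow> (\<forall>s. d s \<in> A i)"

definition det_joint :: "('i \<Rightarrow> 'a set) \<Rightarrow> ('i \<Rightarrow> 's \<Rightarrow> 'a) \<Rightarrow> bool" where
  "det_joint A d \<longleftrightarrow> (\<forall>i. det_policy A i (d i))"

definition detp :: "('s \<Rightarrow> 'a) \<Rightarrow> 's \<Rightarrow> 'a \<Rightarrow> real" where
  "detp d s b = (if b = d s then 1 else 0)"

definition djoint :: "('i \<Rightarrow> 's \<Rightarrow> 'a) \<Rightarrow> ('i \<Rightarrow> 's \<Rightarrow> 'a \<Rightarrow> real)" where
  "djoint d = (\<lambda>i. detp (d i))"

definition chain :: "('i::finite \<Rightarrow> 'a set) \<Rightarrow> ('s \<Rightarrow> ('i \<Rightarrow> 'a) \<Rightarrow> 's \<Rightarrow> real)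
    \<Rightarrow> ('i \<Rightarrow> 's \<Rightarrow> 'a \<Rightarrow> real) \<Rightarrow> 's \<Rightarrow> 's \<Rightarrow> real" where
  "chain A P mu s s' = (\<Sum>a\<in>jacts A. jp mu s a * P s a s')"

fun mpow :: "('s::finite \<Rightarrow> 's \<Rightarrow> real) \<Rightarrow> nat \<Rightarrow> 's \<Rightarrow> 's \<Rightarrow> real" where
  "mpow M 0 s s' = (if s = s' then 1 else 0)"
| "mpow M (Suc n) s s' = (\<Sum>t\<in>UNIV. mpow M n s t * M t s')"

text \<open>Ergodic (irreducible and aperiodic) finite chain: some power of the transition matrix
is entrywise positive.\<close>
definition ergodic :: "('s::finite \<Rightarrow> 's \<Rightarrow> real) \<Rightarrow> bool" where
  "ergodic M \<longleftrightarrow> (\<exists>n. \<forall>s s'. 0 < mpow M n s s')"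

definition stationary :: "('s::finite \<Rightarrow> 's \<Rightarrow> real) \<Rightarrow> ('s \<Rightarrow> real) \<Rightarrow> bool" where
  "stationary M q \<longleftrightarrow> (\<forall>s. 0 \<le> q s) \<and> sum q UNIV = 1
                       \<and> (\<forall>s'. q s' = (\<Sum>s\<in>UNIV. q s * M s s'))"

definition stat :: "('i::finite \<Rightarrow> 'a set) \<Rightarrow> ('s::finite \<Rightarrow> ('i \<Rightarrow> 'a) \<Rightarrow> 's \<Rightarrow> real)
    \<Rightarrow> ('i \<Rightarrow> 's \<Rightarrow> 'a \<Rightarrow> real) \<Rightarrow> 's \<Rightarrow> real" where
  "stat A P mu = (THE q. stationary (chain A P mu) q)"

definition eta :: "('i::finite \<Rightarrow> 'a set) \<Rightarrow> ('s::finite \<Rightarrow> ('i \<Rightarrow> 'a) \<Rightarrow> 's \<Rightarrow> real)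
    \<Rightarrow> ('s \<Rightarrow> ('i \<Rightarrow> 'a) \<Rightarrow> real) \<Rightarrow> ('i \<Rightarrow> 's \<Rightarrow> 'a \<Rightarrow> real) \<Rightarrow> real" where
  "eta A P r mu = (\<Sum>s\<in>UNIV. stat A P mu s * (\<Sum>a\<in>jacts A. jp mu s a * r s a))"

definition zeta :: "('i::finite \<Rightarrow> 'a set) \<Rightarrow> ('s::finite \<Rightarrow> ('i \<Rightarrow> 'a) \<Rightarrow> 's \<Rightarrow> real)
    \<Rightarrow> ('s \<Rightarrow> ('i \<Rightarrow> 'a) \<Rightarrow> real) \<Rightarrow> ('i \<Rightarrow> 's \<Rightarrow> 'a \<Rightarrow> real) \<Rightarrow> real" where
  "zeta A P r mu = (\<Sum>s\<in>UNIV. stat A P mu s *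
       (\<Sum>a\<in>jacts A. jp mu s a * (r s a - eta A P r mu)\<^sup>2))"

definition Jmv :: "('i::finite \<Rightarrow> 'a set) \<Rightarrow> ('s::finite \<Rightarrow> ('i \<Rightarrow> 'a) \<Rightarrow> 's \<Rightarrow> real)
    \<Rightarrow> ('s \<Rightarrow> ('i \<Rightarrow> 'a) \<Rightarrow> real) \<Rightarrow> real \<Rightarrow> ('i \<Rightarrow> 's \<Rightarrow> 'a \<Rightarrow> real) \<Rightarrow> real" where
  "Jmv A P r \<beta> mu = eta A P r mu - \<beta> * zeta A P r mu"

definition fsa :: "('i::finite \<Rightarrow> 'a set) \<Rightarrow> ('s::finite \<Rightarrow> ('i \<Rightarrow> 'a) \<Rightarrow> 's \<Rightarrow> real)
    \<Rightarrow> ('s \<Rightarrow> ('i \<Rightarrow> 'a) \<Rightarrow> real) \<Rightarrow> real \<Rightarrow> ('i \<Rightarrow> 's \<Rightarrow> 'a \<Rightarrow> real) \<Rightarrow> 's \<Rightarrow> ('i \<Rightarrow> 'a) \<Rightarrow> real" where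
  "fsa A P r \<beta> mu s a = r s a - \<beta> * (r s a - eta A P r mu)\<^sup>2"

definition fs :: "('i::finite \<Rightarrow> 'a set) \<Rightarrow> ('s::finite \<Rightarrow> ('i \<Rightarrow> 'a) \<Rightarrow> 's \<Rightarrow> real)
    \<Rightarrow> ('s \<Rightarrow> ('i \<Rightarrow> 'a) \<Rightarrow> real) \<Rightarrow> real \<Rightarrow> ('i \<Rightarrow> 's \<Rightarrow> 'a \<Rightarrow> real) \<Rightarrow> 's \<Rightarrow> real" where
  "fs A P r \<beta> mu s = (\<Sum>a\<in>jacts A. jp mu s a * fsa A P r \<beta> mu s a)"

text \<open>V_f: some solution of the Poisson equation (unique up to an additive constant;
the advantage A_f does not depend on the choice).\<close>
definition Vf :: "('i::finite \<Rightarrow> 'a set) \<Rightarrow> ('s::finite \<Rightarrow> ('i \<Rightarrow> 'a) \<Rightarrow> 's \<Rightarrow> real)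
    \<Rightarrow> ('s \<Rightarrow> ('i \<Rightarrow> 'a) \<Rightarrow> real) \<Rightarrow> real \<Rightarrow> ('i \<Rightarrow> 's \<Rightarrow> 'a \<Rightarrow> real) \<Rightarrow> 's \<Rightarrow> real" where
  "Vf A P r \<beta> mu = (SOME V. \<forall>s. V s = fs A P r \<beta> mu s - Jmv A P r \<beta> mu
                                     + (\<Sum>s'\<in>UNIV. chain A P mu s s' * V s'))"

definition Qf :: "('i::finite \<Rightarrow> 'a set) \<Rightarrow> ('s::finite \<Rightarrow> ('i \<Rightarrow> 'a) \<Rightarrow> 's \<Rightarrow> real)
    \<Rightarrow> ('s \<Rightarrow> ('i \<Rightarrow> 'a) \<Rightarrow> real) \<Rightarrow> real \<Rightarrow> ('i \<Rightarrow> 's \<Rightarrow> 'a \<Rightarrow> real) \<Rightarrow> 's \<Rightarrow> ('i \<Rightarrow> 'a) \<Rightarrow> real" where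
  "Qf A P r \<beta> mu s a = fsa A P r \<beta> mu s a - Jmv A P r \<beta> mu
                        + (\<Sum>s'\<in>UNIV. P s a s' * Vf A P r \<beta> mu s')"

definition Af :: "('i::finite \<Rightarrow> 'a set) \<Rightarrow> ('s::finite \<Rightarrow> ('i \<Rightarrow> 'a) \<Rightarrow> 's \<Rightarrow> real)
    \<Rightarrow> ('s \<Rightarrow> ('i \<Rightarrow> 'a) \<Rightarrow> real) \<Rightarrow> real \<Rightarrow> ('i \<Rightarrow> 's \<Rightarrow> 'a \<Rightarrow> real) \<Rightarrow> 's \<Rightarrow> ('i \<Rightarrow> 'a) \<Rightarrow> real" where
  "Af A P r \<beta> mu s a = Qf A P r \<beta> mu s a - Vf A P r \<beta> mu s"

definition expA :: "('i::finite \<Rightarrow> 'a set) \<Rightarrow> ('s::finite \<Rightarrow> ('i \<Rightarrow> 'a) \<Rightarrow> 's \<Rightarrow> real)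
    \<Rightarrow> ('s \<Rightarrow> ('i \<Rightarrow> 'a) \<Rightarrow> real) \<Rightarrow> real \<Rightarrow> ('i \<Rightarrow> 's \<Rightarrow> 'a \<Rightarrow> real) \<Rightarrow> 'i \<Rightarrow> 's \<Rightarrow> 'a \<Rightarrow> real" where
  "expA A P r \<beta> mu i s b =
     (\<Sum>a\<in>{a\<in>jacts A. a i = b}. (\<Prod>j\<in>UNIV - {i}. mu j s (a j)) * Af A P r \<beta> mu s a)"

definition argmaxA :: "('i::finite \<Rightarrow> 'a set) \<Rightarrow> ('s::finite \<Rightarrow> ('i \<Rightarrow> 'a) \<Rightarrow> 's \<Rightarrow> real)
    \<Rightarrow> ('s \<Rightarrow> ('i \<Rightarrow> 'a) \<Rightarrow> real) \<Rightarrow> real \<Rightarrow> ('i \<Rightarrow> 's \<Rightarrow> 'a \<Rightarrow> real) \<Rightarrow> 'i \<Rightarrow> 's \<Rightarrow> 'a set" where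
  "argmaxA A P r \<beta> mu i s =
     {b\<in>A i. \<forall>b'\<in>A i. expA A P r \<beta> mu i s b' \<le> expA A P r \<beta> mu i s b}"

text \<open>One sweep of MV-MAPI over the agents in the order given by a list (the permutation).
The current joint policy is the intermediate policy \<open>\<mu>^(k,h-1)\<close>; the agent being updated still
uses its old policy, which is kept wherever it attains the maximum.\<close>
inductive sweep :: "('i::finite \<Rightarrow> 'a set) \<Rightarrow> ('s::finite \<Rightarrow> ('i \<Rightarrow> 'a) \<Rightarrow> 's \<Rightarrow> real)
    \<Rightarrow> ('s \<Rightarrow> ('i \<Rightarrow> 'a) \<Rightarrow> real) \<Rightarrow> real
    \<Rightarrow> ('i \<Rightarrow> 's \<Rightarrow> 'a) \<Rightarrow> 'i list \<Rightarrow> ('i \<Rightarrow> 's \<Rightarrow> 'a) \<Rightarrow> bool"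
  for A P r \<beta> where
  sweep_Nil: "sweep A P r \<beta> d [] d"
| sweep_Cons: "\<lbrakk> \<forall>s. e s \<in> argmaxA A P r \<beta> (djoint d) i s
                   \<and> (d i s \<in> argmaxA A P r \<beta> (djoint d) i s \<longrightarrow> e s = d i s);
                 sweep A P r \<beta> (d(i := e)) is d' \<rbrakk>
               \<Longrightarrow> sweep A P r \<beta> d (i # is) d'"

text \<open>mvmapi A P r \<beta> d0 d: some execution of MV-MAPI from d0 (with some choice of random
permutations) terminates and returns d.\<close>
inductive mvmapi :: "('i::finite \<Rightarrow> 'a set) \<Rightarrow> ('s::finite \<Rightarrow> ('i \<Rightarrow> 'a) \<Rightarrow> 's \<Rightarrow> real)
    \<Rightarrow> ('s \<Rightarrow> ('i \<Rightarrow> 'a) \<Rightarrow> real) \<Rightarrow> real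
    \<Rightarrow> ('i \<Rightarrow> 's \<Rightarrow> 'a) \<Rightarrow> ('i \<Rightarrow> 's \<Rightarrow> 'a) \<Rightarrow> bool"
  for A P r \<beta> where
  mvmapi_stop: "\<lbrakk> distinct ps; set ps = UNIV; sweep A P r \<beta> d ps d \<rbrakk> \<Longrightarrow> mvmapi A P r \<beta> d d"
| mvmapi_step: "\<lbrakk> distinct ps; set ps = UNIV; sweep A P r \<beta> d ps d'; d' \<noteq> d;
                  mvmapi A P r \<beta> d' out \<rbrakk> \<Longrightarrow> mvmapi A P r \<beta> d out"

definition Dset :: "('i::finite \<Rightarrow> 'a set) \<Rightarrow> ('s::finite \<Rightarrow> ('i \<Rightarrow> 'a) \<Rightarrow> 's \<Rightarrow> real)
    \<Rightarrow> ('s \<Rightarrow> ('i \<Rightarrow> 'a) \<Rightarrow> real) \<Rightarrow> real \<Rightarrow> ('i \<Rightarrow> 's \<Rightarrow> 'a) \<Rightarrow> 'i \<Rightarrow> ('s \<Rightarrow> 'a) set" where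
  "Dset A P r \<beta> dt i = {e. det_policy A i e \<and> e \<noteq> dt i
                            \<and> (\<forall>s. e s \<in> argmaxA A P r \<beta> (djoint dt) i s)}"

text \<open>modified A P r \<beta> d0 out: some execution of Modified MV-MAPI started from the
deterministic joint policy d0 terminates with output out. The loop over agents follows
the linear order on 'i.\<close>
inductive modified :: "('i::{finite,linorder} \<Rightarrow> 'a set) \<Rightarrow> ('s::finite \<Rightarrow> ('i \<Rightarrow> 'a) \<Rightarrow> 's \<Rightarrow> real)
    \<Rightarrow> ('s \<Rightarrow> ('i \<Rightarrow> 'a) \<Rightarrow> real) \<Rightarrow> real
    \<Rightarrow> ('i \<Rightarrow> 's \<Rightarrow> 'a) \<Rightarrow> ('i \<Rightarrow> 's \<Rightarrow> 'a) \<Rightarrow> bool"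
  for A P r \<beta> where
  modified_done: "\<lbrakk> mvmapi A P r \<beta> d0 dt;
                    \<forall>i. \<forall>e\<in>Dset A P r \<beta> dt i.
                        eta A P r (djoint (dt(i := e))) = eta A P r (djoint dt) \<rbrakk>
                  \<Longrightarrow> modified A P r \<beta> d0 dt"
| modified_restart: "\<lbrakk> mvmapi A P r \<beta> d0 dt;
                    \<forall>j<i. \<forall>e\<in>Dset A P r \<beta> dt j.
                        eta A P r (djoint (dt(j := e))) = eta A P r (djoint dt);
                    e \<in> Dset A P r \<beta> dt i;
                    eta A P r (djoint (dt(i := e))) \<noteq> eta A P r (djoint dt);
                    modified A P r \<beta> (dt(i := e)) out \<rbrakk>
                  \<Longrightarrow> modified A P r \<beta> d0 out"

definition Dmu :: "('i::finite \<Rightarrow> 'a set) \<Rightarrow> ('s::finite \<Rightarrow> ('i \<Rightarrow> 'a) \<Rightarrow> 's \<Rightarrow> real)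
    \<Rightarrow> ('s \<Rightarrow> ('i \<Rightarrow> 'a) \<Rightarrow> real) \<Rightarrow> real \<Rightarrow> ('i \<Rightarrow> 's \<Rightarrow> 'a) \<Rightarrow> ('i \<Rightarrow> 's \<Rightarrow> 'a) set" where
  "Dmu A P r \<beta> dt = {dt(i := e) | i e. e \<in> Dset A P r \<beta> dt i}"

definition Dtilde :: "('i::finite \<Rightarrow> 'a set) \<Rightarrow> ('s::finite \<Rightarrow> ('i \<Rightarrow> 'a) \<Rightarrow> 's \<Rightarrow> real)
    \<Rightarrow> ('s \<Rightarrow> ('i \<Rightarrow> 'a) \<Rightarrow> real) \<Rightarrow> real \<Rightarrow> ('i \<Rightarrow> 's \<Rightarrow> 'a) \<Rightarrow> ('i \<Rightarrow> 's \<Rightarrow> 'a) set" where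
  "Dtilde A P r \<beta> dt = {d. det_joint A d} - Dmu A P r \<beta> dt"

end

theory Submission
  imports Defs "HOL-Analysis.Analysis"
begin

(* For any joint policies mu and mu',
     J(mu') - J(mu) = E_mu'[A_f^mu] + beta (eta(mu') - eta(mu))^2,
   where E_mu' averages over the stationary distribution of mu' (a performance difference
   identity for the mean-variance objective). At the output mu~ of Modified MV-MAPI every agent
   plays a maximiser of its expected advantage, whose value there is 0.
   (1) For mu in D^mu~ the advantage term vanishes and eta is unchanged by construction, so J
   agrees. A policy improvement argument for the fixed reward f^mu shows that some deterministic
   policy is optimal; if it was pruned, then mu~, which is never pruned, has the same value.
   (2) Mixing weight delta of a non-maximising policy into agent i costs at least
   delta * kappa * gamma in the advantage term (kappa bounds stationary probabilities from below
   near mu~, gamma is the gap to the maximum), while eta moves by O(delta), so the variance term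
   gains only O(delta^2).
   The Markov chain facts (stationary distributions, the Poisson equation) come from
   rank (I - M) = |S| - 1, i.e. from the maximum principle for harmonic functions of an ergodic
   chain. *)

lemma finite_has_max:
  fixes f :: "'x \<Rightarrow> 'b::linorder"
  assumes "finite S" "S \<noteq> {}"
  obtains x where "x \<in> S" "\<forall>y\<in>S. f y \<le> f x"
proof -
  have "Max (f ` S) \<in> f ` S" using assms by simp
  then obtain x where "x \<in> S" "f x = Max (f ` S)" by (metis imageE)
  moreover have "\<forall>y\<in>S. f y \<le> Max (f ` S)" using assms(1) by simp
  ultimately show ?thesis using that by simp
qed

lemma sum_nonpos_le_single_term:
  fixes p g :: "'x \<Rightarrow> real"
  assumes "finite S" and "x \<in> S" and "\<forall>y\<in>S. 0 \<le> p y \<and> g y \<le> 0"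
    and "\<kappa> \<le> p x" and "g x \<le> - \<gamma>" and "0 \<le> \<gamma>"
  shows "(\<Sum>y\<in>S. p y * g y) \<le> - (\<kappa> * \<gamma>)"
proof -
  have "(\<Sum>y\<in>S. p y * g y) = p x * g x + (\<Sum>y\<in>S - {x}. p y * g y)"
    using assms(1,2) by (rule sum.remove)
  also have "(\<Sum>y\<in>S - {x}. p y * g y) \<le> 0"
    using assms(3) by (intro sum_nonpos) (simp add: mult_nonneg_nonpos)
  also have "p x * g x \<le> p x * (- \<gamma>)"
    using assms(2,3,5) by (intro mult_left_mono) auto
  also have "\<dots> \<le> \<kappa> * (- \<gamma>)"
    using assms(4,6) by (intro mult_right_mono_neg) auto
  finally show ?thesis by simp
qed

lemma sum_mix_weights:
  fixes p q f :: "'x \<Rightarrow> real"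
  shows "(\<Sum>a\<in>S. ((1 - \<delta>) * p a + \<delta> * q a) * f a) = (1 - \<delta>) * (\<Sum>a\<in>S. p a * f a) + \<delta> * (\<Sum>a\<in>S. q a * f a)"
proof -
  have "(\<Sum>a\<in>S. ((1 - \<delta>) * p a + \<delta> * q a) * f a) = (\<Sum>a\<in>S. (1 - \<delta>) * (p a * f a) + \<delta> * (q a * f a))"
    by (intro sum.cong) (simp_all add: algebra_simps)
  then show ?thesis by (simp only: sum.distrib sum_distrib_left)
qed

lemma abs_weighted_sum_le:
  fixes p h :: "'x \<Rightarrow> real"
  assumes "\<forall>x\<in>S. 0 \<le> p x \<and> p x \<le> 1"
  shows "\<bar>\<Sum>x\<in>S. p x * h x\<bar> \<le> (\<Sum>x\<in>S. \<bar>h x\<bar>)"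
proof -
  have "\<bar>\<Sum>x\<in>S. p x * h x\<bar> \<le> (\<Sum>x\<in>S. \<bar>p x * h x\<bar>)" by (rule sum_abs)
  also have "\<dots> \<le> (\<Sum>x\<in>S. \<bar>h x\<bar>)"
    using assms by (intro sum_mono) (simp add: abs_mult mult_left_le_one_le)
  finally show ?thesis .
qed

lemma mult_square_le_of_abs_le:
  fixes x y c :: real
  assumes "\<bar>x\<bar> \<le> y" and "0 \<le> c"
  shows "c * x\<^sup>2 \<le> c * y\<^sup>2"
proof -
  have "\<bar>x\<bar>\<^sup>2 \<le> y\<^sup>2" using assms(1) by (rule power_mono) simp
  then show ?thesis using assms(2) by (intro mult_left_mono) simp_all
qed

lemma first_order_dominates:
  fixes \<delta> K X a b :: real
  assumes "0 < \<delta>" and "\<delta> * (X + 1) \<le> K" and "a \<le> - \<delta> * K" and "b \<le> \<delta>\<^sup>2 * X"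
  shows "a + b < 0"
proof -
  have "\<delta> * (X + 1) = \<delta> * X + \<delta>" by (simp add: algebra_simps)
  then have "\<delta> * X < K" using assms(1,2) by linarith
  then have "\<delta> * (\<delta> * X) < \<delta> * K" using assms(1) by simp
  moreover have "\<delta>\<^sup>2 * X = \<delta> * (\<delta> * X)" by (simp add: power2_eq_square)
  ultimately show ?thesis using assms(3,4) by linarith
qed

section \<open>Finite ergodic Markov chains\<close>

definition stochastic :: "('s::finite \<Rightarrow> 's \<Rightarrow> real) \<Rightarrow> bool" where
  "stochastic M \<longleftrightarrow> (\<forall>s t. 0 \<le> M s t) \<and> (\<forall>s. (\<Sum>t\<in>UNIV. M s t) = 1)"

lemma mpow_nonneg: "\<forall>s t. 0 \<le> M s t \<Longrightarrow> 0 \<le> mpow M n s t"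
  by (induction n arbitrary: t) (auto intro!: sum_nonneg)

lemma mpow_mono:
  assumes N: "\<forall>s t. 0 \<le> N s t" and NM: "\<forall>s t. c * N s t \<le> M s t" and c: "0 \<le> c"
  shows "c ^ n * mpow N n s t \<le> mpow M n s t"
proof (induction n arbitrary: t)
  case (Suc n)
  have "c ^ Suc n * mpow N (Suc n) s t = (\<Sum>u\<in>UNIV. (c ^ n * mpow N n s u) * (c * N u t))"
    by (simp add: sum_distrib_left ac_simps)
  also have "\<dots> \<le> (\<Sum>u\<in>UNIV. mpow M n s u * M u t)"
  proof (rule sum_mono)
    fix u
    have "0 \<le> c ^ n * mpow N n s u" using mpow_nonneg [OF N] c by simp
    moreover have "0 \<le> c * N u t" using N c by simp
    ultimately show "(c ^ n * mpow N n s u) * (c * N u t) \<le> mpow M n s u * M u t"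
      using Suc NM by (intro mult_mono) (auto intro: order_trans)
  qed
  finally show ?case by simp
qed simp

lemma stationaryD:
  assumes "stationary M q"
  shows "0 \<le> q s" and "(\<Sum>s\<in>UNIV. q s) = 1" and "(\<Sum>s\<in>UNIV. q s * M s t) = q t"
  using assms unfolding stationary_def by (blast, blast, metis)

lemma stationary_mpow:
  assumes "stationary M q" shows "q t = (\<Sum>s\<in>UNIV. q s * mpow M n s t)"
proof (induction n arbitrary: t)
  case 0
  show ?case by (simp add: if_distrib [of "(*) _"] cong: if_cong)
next
  case (Suc n)
  have "(\<Sum>s\<in>UNIV. q s * mpow M (Suc n) s t) = (\<Sum>s\<in>UNIV. \<Sum>u\<in>UNIV. q s * mpow M n s u * M u t)"
    by (simp only: mpow.simps sum_distrib_left mult.assoc)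
  also have "\<dots> = (\<Sum>u\<in>UNIV. (\<Sum>s\<in>UNIV. q s * mpow M n s u) * M u t)"
    by (subst sum.swap) (simp only: sum_distrib_right)
  also have "\<dots> = (\<Sum>u\<in>UNIV. q u * M u t)" by (simp only: Suc [symmetric])
  also have "\<dots> = q t" by (rule stationaryD(3) [OF assms])
  finally show ?case by simp
qed

lemma harmonic_mpow:
  assumes "\<forall>s. x s = (\<Sum>t\<in>UNIV. M s t * x t)" shows "x s = (\<Sum>t\<in>UNIV. mpow M n s t * x t)"
proof (induction n arbitrary: s)
  case 0
  show ?case by (simp add: if_distrib [of "\<lambda>c. c * _"] cong: if_cong)
next
  case (Suc n)
  have "(\<Sum>t\<in>UNIV. mpow M (Suc n) s t * x t) = (\<Sum>t\<in>UNIV. \<Sum>u\<in>UNIV. mpow M n s u * M u t * x t)"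
    by (simp only: mpow.simps sum_distrib_right)
  also have "\<dots> = (\<Sum>u\<in>UNIV. mpow M n s u * (\<Sum>t\<in>UNIV. M u t * x t))"
    by (subst sum.swap) (simp only: sum_distrib_left mult.assoc)
  also have "\<dots> = (\<Sum>u\<in>UNIV. mpow M n s u * x u)" by (simp only: assms [rule_format, symmetric])
  also have "\<dots> = x s" by (rule Suc [symmetric])
  finally show ?case by simp
qed

lemma mpow_row_sum: "stochastic M \<Longrightarrow> (\<Sum>t\<in>UNIV. mpow M n s t) = 1"
  using harmonic_mpow [of "\<lambda>_. 1" M s n] by (simp add: stochastic_def)

lemma ergodic_harmonic_const:
  assumes M: "stochastic M" and erg: "ergodic M" and h: "\<forall>s. x s = (\<Sum>t\<in>UNIV. M s t * x t)"
  shows "x s = x t"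
proof -
  obtain n where pos: "\<forall>s t. 0 < mpow M n s t" using erg by (auto simp: ergodic_def)
  obtain m where m: "\<forall>u. x u \<le> x m" using finite_has_max [of UNIV x] by auto
  have "(\<Sum>u\<in>UNIV. mpow M n m u * (x m - x u))
      = (\<Sum>u\<in>UNIV. mpow M n m u) * x m - (\<Sum>u\<in>UNIV. mpow M n m u * x u)"
    by (simp only: right_diff_distrib sum_subtractf sum_distrib_right)
  also have "\<dots> = 0"
    by (simp only: mpow_row_sum [OF M] harmonic_mpow [OF h, of m n, symmetric])
  moreover have "\<forall>u\<in>UNIV. 0 \<le> mpow M n m u * (x m - x u)"
    using m pos by (simp add: less_imp_le)
  ultimately have zero: "\<forall>u. mpow M n m u * (x m - x u) = 0"
    by (simp add: sum_nonneg_eq_0_iff)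
  have "x u = x m" for u
  proof -
    have "mpow M n m u \<noteq> 0" using pos by (metis less_irrefl)
    then show ?thesis using zero [rule_format, of u] by simp
  qed
  from this [of s] this [of t] show ?thesis by (simp only:)
qed

lemma stationary_pos:
  assumes M: "stochastic M" and erg: "ergodic M" and q: "stationary M q"
  shows "0 < q s"
proof -
  obtain n where pos: "\<forall>s t. 0 < mpow M n s t" using erg by (auto simp: ergodic_def)
  have q_nonneg: "\<forall>u. 0 \<le> q u" and "sum q UNIV = 1" using stationaryD [OF q] by auto
  have "\<exists>u. 0 < q u"
  proof (rule ccontr)
    assume "\<not> (\<exists>u. 0 < q u)"
    then have "sum q UNIV \<le> 0" by (simp add: not_less sum_nonpos)
    with \<open>sum q UNIV = 1\<close> show False by simp
  qed
  then obtain u where u: "0 < q u" ..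
  have "0 < q u * mpow M n u s" using u pos by simp
  also have "\<dots> \<le> (\<Sum>v\<in>UNIV. q v * mpow M n v s)"
  proof (rule member_le_sum)
    show "0 \<le> q v * mpow M n v s" for v using q_nonneg pos by (simp add: order_less_imp_le)
  qed auto
  also have "\<dots> = q s" by (rule stationary_mpow [OF q, symmetric])
  finally show ?thesis .
qed

lemma dim_null_space_add_rank:
  fixes A :: "real^'n^'n"
  shows "dim {x. A *v x = 0} + rank A = CARD('n)"
proof -
  let ?R = "span (rows A)"
  have "{y \<in> UNIV. \<forall>x\<in>?R. orthogonal x y} = {x. A *v x = 0}"
  proof (intro set_eqI iffI)
    fix y assume "y \<in> {y \<in> UNIV. \<forall>x\<in>?R. orthogonal x y}"
    then have "\<forall>i. inner (A $ i) y = 0"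
      by (auto simp: rows_def orthogonal_def row_def vec_lambda_eta intro: span_base)
    then show "y \<in> {x. A *v x = 0}" by (simp add: vec_eq_iff matrix_vector_mul_component)
  next
    fix y assume "y \<in> {x. A *v x = 0}"
    then have "\<forall>i. inner (A $ i) y = 0" by (simp add: vec_eq_iff matrix_vector_mul_component)
    then have "orthogonal y x" if "x \<in> rows A" for x
      using that by (auto simp: rows_def orthogonal_def row_def vec_lambda_eta inner_commute)
    then have "orthogonal y x" if "x \<in> ?R" for x
      using that orthogonal_to_span by blast
    then show "y \<in> {y \<in> UNIV. \<forall>x\<in>?R. orthogonal x y}"
      by (simp add: orthogonal_commute)
  qed
  moreover have "dim {y \<in> UNIV. \<forall>x\<in>?R. orthogonal x y} + dim ?R = dim (UNIV :: (real^'n) set)"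
    by (rule dim_subspace_orthogonal_to_vectors) auto
  ultimately show ?thesis by (simp add: row_rank_def)
qed

definition laplacian :: "('s::finite \<Rightarrow> 's \<Rightarrow> real) \<Rightarrow> real^'s^'s" where
  "laplacian M = (\<chi> s t. (if s = t then 1 else 0) - M s t)"

lemma laplacian_mult_vec: "(laplacian M *v x) $ s = x $ s - (\<Sum>t\<in>UNIV. M s t * x $ t)"
  by (simp add: laplacian_def matrix_vector_mult_def left_diff_distrib sum_subtractf
      if_distrib [of "\<lambda>c. c * _"] cong: if_cong)

lemma laplacian_mult_vec_eq_0: "laplacian M *v x = 0 \<longleftrightarrow> (\<forall>s. x $ s = (\<Sum>t\<in>UNIV. M s t * x $ t))"
  by (simp add: vec_eq_iff laplacian_mult_vec)

lemma vec_mult_laplacian: "(y v* laplacian M) $ t = y $ t - (\<Sum>s\<in>UNIV. y $ s * M s t)"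
  by (simp add: laplacian_def vector_matrix_mult_def right_diff_distrib sum_subtractf
      if_distrib [of "\<lambda>c. _ * c"] cong: if_cong)

lemma stationary_iff_left_null:
  "stationary M q \<longleftrightarrow> (\<forall>s. 0 \<le> q s) \<and> (\<Sum>s\<in>UNIV. q s) = 1 \<and> (\<chi> s. q s) v* laplacian M = 0"
proof -
  have "(\<chi> s. q s) v* laplacian M = 0 \<longleftrightarrow> (\<forall>t. q t = (\<Sum>s\<in>UNIV. q s * M s t))"
    by (simp only: vec_eq_iff vec_mult_laplacian vec_lambda_beta zero_index right_minus_eq)
  then show ?thesis unfolding stationary_def by blast
qed

lemma null_space_laplacian:
  assumes M: "stochastic M" and erg: "ergodic M"
  shows "{x. laplacian M *v x = 0} = span {vec 1}"
proof
  show "{x. laplacian M *v x = 0} \<subseteq> span {vec 1}"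
  proof
    fix x assume "x \<in> {x. laplacian M *v x = 0}"
    then have "\<forall>s. x $ s = (\<Sum>t\<in>UNIV. M s t * x $ t)"
      using laplacian_mult_vec_eq_0 by blast
    define c where "c = x $ undefined"
    have "x $ s = c" for s
      unfolding c_def by (rule ergodic_harmonic_const [OF M erg]) fact
    then have "x = c *\<^sub>R vec 1" by (simp add: vec_eq_iff)
    then show "x \<in> span {vec 1}" by (simp add: span_base span_scale)
  qed
  have "subspace {x. laplacian M *v x = 0}"
    by (simp add: subspace_def matrix_vector_right_distrib matrix_vector_mult_scaleR)
  moreover have "laplacian M *v vec 1 = 0"
    using M by (simp add: vec_eq_iff laplacian_mult_vec stochastic_def)
  ultimately show "span {vec 1} \<subseteq> {x. laplacian M *v x = 0}"
    by (intro span_minimal) auto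
qed

lemma rank_laplacian:
  fixes M :: "'s::finite \<Rightarrow> 's \<Rightarrow> real"
  assumes M: "stochastic M" and erg: "ergodic M"
  shows "rank (laplacian M) = CARD('s) - 1"
proof -
  have "dim {x. laplacian M *v x = 0} = 1"
    using null_space_laplacian [OF M erg] by (simp add: vec_eq_iff)
  then show ?thesis using dim_null_space_add_rank [of "laplacian M"] by simp
qed

lemma abs_left_invariant:
  assumes M: "stochastic M" and y: "\<forall>t. y t = (\<Sum>s\<in>UNIV. y s * M s t)"
  shows "\<bar>y t\<bar> = (\<Sum>s\<in>UNIV. \<bar>y s\<bar> * M s t)"
proof -
  have M_nonneg: "0 \<le> M s t" for s t using M by (simp add: stochastic_def)
  have le: "\<bar>y t\<bar> \<le> (\<Sum>s\<in>UNIV. \<bar>y s\<bar> * M s t)" for t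
  proof -
    have "\<bar>y t\<bar> = \<bar>\<Sum>s\<in>UNIV. y s * M s t\<bar>" by (subst y [rule_format]) rule
    also have "\<dots> \<le> (\<Sum>s\<in>UNIV. \<bar>y s\<bar> * M s t)"
      using sum_abs [of "\<lambda>s. y s * M s t" UNIV] by (simp add: abs_mult M_nonneg)
    finally show ?thesis .
  qed
  \<comment> \<open>Both sides of \<open>le\<close> have the same total mass, so \<open>le\<close> is an equality.\<close>
  have "(\<Sum>t\<in>UNIV. \<Sum>s\<in>UNIV. \<bar>y s\<bar> * M s t) = (\<Sum>s\<in>UNIV. \<bar>y s\<bar> * (\<Sum>t\<in>UNIV. M s t))"
    by (subst sum.swap) (simp only: sum_distrib_left)
  also have "\<dots> = (\<Sum>t\<in>UNIV. \<bar>y t\<bar>)" using M by (simp add: stochastic_def)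
  finally have "(\<Sum>t\<in>UNIV. (\<Sum>s\<in>UNIV. \<bar>y s\<bar> * M s t) - \<bar>y t\<bar>) = 0"
    by (simp add: sum_subtractf)
  then show ?thesis
    using le sum_nonneg_eq_0_iff [of UNIV "\<lambda>t. (\<Sum>s\<in>UNIV. \<bar>y s\<bar> * M s t) - \<bar>y t\<bar>"] by auto
qed

lemma exists_stationary:
  fixes M :: "'s::finite \<Rightarrow> 's \<Rightarrow> real"
  assumes M: "stochastic M" and erg: "ergodic M"
  obtains q where "stationary M q"
proof -
  have "0 < CARD('s)" by simp
  then have "rank (transpose (laplacian M)) \<noteq> CARD('s)"
    using rank_laplacian [OF M erg] rank_transpose [of "laplacian M"] by linarith
  then obtain y where "y \<noteq> 0" and "transpose (laplacian M) *v y = 0"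
    using matrix_nonfull_linear_equations_eq by blast
  then have "y v* laplacian M = 0" by simp
  then have "\<forall>t. y $ t = (\<Sum>s\<in>UNIV. y $ s * M s t)"
    by (metis (no_types) vec_mult_laplacian right_minus_eq zero_index)
  from abs_left_invariant [OF M this]
  have u_eq: "\<bar>y $ t\<bar> = (\<Sum>s\<in>UNIV. \<bar>y $ s\<bar> * M s t)" for t .
  define Z where "Z = (\<Sum>s\<in>UNIV. \<bar>y $ s\<bar>)"
  obtain s0 where "y $ s0 \<noteq> 0" using \<open>y \<noteq> 0\<close> by (auto simp: vec_eq_iff)
  then have "0 < Z"
    unfolding Z_def by (intro sum_pos2 [of UNIV s0]) auto
  have "stationary M (\<lambda>s. \<bar>y $ s\<bar> / Z)"
    unfolding stationary_def
  proof (intro conjI allI)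
    show "0 \<le> \<bar>y $ s\<bar> / Z" for s using \<open>0 < Z\<close> by simp
    show "(\<Sum>s\<in>UNIV. \<bar>y $ s\<bar> / Z) = 1" using \<open>0 < Z\<close> by (simp add: Z_def flip: sum_divide_distrib)
    show "\<bar>y $ t\<bar> / Z = (\<Sum>s\<in>UNIV. \<bar>y $ s\<bar> / Z * M s t)" for t
      by (subst u_eq [of t]) (simp add: sum_divide_distrib)
  qed
  then show ?thesis by (rule that)
qed

lemma stationary_unique:
  fixes M :: "'s::finite \<Rightarrow> 's \<Rightarrow> real"
  assumes M: "stochastic M" and erg: "ergodic M" and q: "stationary M q" and q': "stationary M q'"
  shows "q' = q"
proof -
  let ?N = "{y. y v* laplacian M = 0}"
  let ?v = "\<lambda>q. \<chi> s. q s :: real^'s"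
  have N: "?N = {y. transpose (laplacian M) *v y = 0}" by simp
  have "0 < CARD('s)" by simp
  then have "dim ?N = 1"
    using dim_null_space_add_rank [of "transpose (laplacian M)"] rank_laplacian [OF M erg]
    unfolding N rank_transpose by linarith
  have in_N: "?v p \<in> ?N" if "stationary M p" for p
    using that by (simp add: stationary_iff_left_null)
  have "?v q \<noteq> 0"
    using stationaryD(2) [OF q] by (auto simp: vec_eq_iff intro: ccontr)
  have "(c *\<^sub>R y) v* A = c *\<^sub>R (y v* A)" for c and y :: "real^'s" and A :: "real^'s^'s"
    by (simp add: vec_eq_iff vector_matrix_mult_def sum_distrib_left mult.assoc)
  then have "subspace ?N"
    by (simp add: subspace_def vector_matrix_left_distrib)
  moreover have "span {?v q} \<subseteq> ?N"
    using in_N [OF q] calculation by (intro span_minimal) simp_all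
  ultimately have "span {?v q} = ?N"
    using \<open>dim ?N = 1\<close> \<open>?v q \<noteq> 0\<close> by (intro subspace_dim_equal) simp_all
  then obtain c where c: "?v q' = c *\<^sub>R ?v q"
    using in_N [OF q'] by (auto simp: span_singleton)
  then have q'_eq: "q' s = c * q s" for s
    by (simp add: vec_eq_iff)
  have "c = c * (\<Sum>s\<in>UNIV. q s)" using stationaryD(2) [OF q] by simp
  also have "\<dots> = (\<Sum>s\<in>UNIV. q' s)" by (simp add: q'_eq sum_distrib_left)
  finally have "c = 1" using stationaryD(2) [OF q'] by simp
  then show ?thesis using q'_eq by auto
qed

lemma poisson_solvable:
  fixes M :: "'s::finite \<Rightarrow> 's \<Rightarrow> real"
  assumes M: "stochastic M" and erg: "ergodic M" and q: "stationary M q"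
    and g: "(\<Sum>s\<in>UNIV. q s * g s) = 0"
  obtains V where "\<forall>s. V s = g s + (\<Sum>t\<in>UNIV. M s t * V t)"
proof -
  let ?L = "laplacian M"
  define vq :: "real^'s" where "vq = (\<chi> s. q s)"
  have "vq v* ?L = 0" using q by (simp add: vq_def stationary_iff_left_null)
  then have "range ((*v) ?L) \<subseteq> {x. vq \<bullet> x = 0}"
    by (auto simp flip: dot_lmul_matrix)
  moreover have "vq \<noteq> 0"
    using stationaryD(2) [OF q] by (auto simp: vq_def vec_eq_iff intro: ccontr)
  then have "dim {x. vq \<bullet> x = 0} \<le> dim (range ((*v) ?L))"
    using rank_laplacian [OF M erg] by (simp add: dim_hyperplane flip: rank_dim_range)
  ultimately have range_L: "range ((*v) ?L) = {x. vq \<bullet> x = 0}"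
    by (intro subspace_dim_equal subspace_hyperplane linear_subspace_image) (auto simp: subspace_UNIV)
  have "vq \<bullet> (\<chi> s. g s) = 0" using g by (simp add: inner_vec_def vq_def)
  then have "(\<chi> s. g s) \<in> range ((*v) ?L)" using range_L by simp
  then obtain x where x: "?L *v x = (\<chi> s. g s)" by (metis rangeE)
  have "x $ s = g s + (\<Sum>t\<in>UNIV. M s t * x $ t)" for s
    using arg_cong [OF x, of "\<lambda>v. v $ s"] unfolding laplacian_mult_vec by simp
  then show ?thesis by (intro that [of "\<lambda>s. x $ s"]) blast
qed

lemma stationary_lower_bound:
  fixes M :: "'s::finite \<Rightarrow> 's \<Rightarrow> real"
  assumes M: "stochastic M" and erg: "ergodic M"
  obtains \<kappa> where "0 < \<kappa>"
    and "\<And>N q s. \<forall>s t. M s t \<le> 2 * N s t \<Longrightarrow> stationary N q \<Longrightarrow> \<kappa> \<le> q s"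
proof -
  obtain n where pos: "\<forall>s t. 0 < mpow M n s t" using erg by (auto simp: ergodic_def)
  define m where "m = Min (range (\<lambda>(s, t). mpow M n s t))"
  have m_le: "m \<le> mpow M n s t" for s t
    unfolding m_def by (rule Min_le) (auto intro: image_eqI [where x = "(s, t)"])
  have "0 < m"
    unfolding m_def using pos by (subst Min_gr_iff) auto
  have "(1/2) ^ n * m \<le> q s" if NM: "\<forall>s t. M s t \<le> 2 * N s t" and q: "stationary N q" for N q s
  proof -
    have M_nonneg: "\<forall>s t. 0 \<le> M s t" using M by (simp add: stochastic_def)
    have M_le_N: "\<forall>s t. 1/2 * M s t \<le> N s t"
    proof (intro allI)
      fix s t show "1/2 * M s t \<le> N s t" using NM [rule_format, of s t] by simp
    qed
    have "(1/2) ^ n * m = (\<Sum>u\<in>UNIV. q u * ((1/2) ^ n * m))"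
      by (simp flip: sum_distrib_right add: stationaryD(2) [OF q])
    also have "\<dots> \<le> (\<Sum>u\<in>UNIV. q u * mpow N n u s)"
    proof (intro sum_mono mult_left_mono)
      fix u
      have "(1/2) ^ n * m \<le> (1/2) ^ n * mpow M n u s" using m_le by simp
      also have "\<dots> \<le> mpow N n u s"
        using M_le_N M_nonneg by (intro mpow_mono) auto
      finally show "(1/2) ^ n * m \<le> mpow N n u s" .
    qed (rule stationaryD(1) [OF q])
    also have "\<dots> = q s" by (rule stationary_mpow [OF q, symmetric])
    finally show ?thesis .
  qed
  then show ?thesis using \<open>0 < m\<close> by (intro that [of "(1/2) ^ n * m"]) auto
qed

section \<open>Deterministic policies and the algorithm\<close>

lemma det_joint_upd: "det_joint A d \<Longrightarrow> det_policy A i e \<Longrightarrow> det_joint A (d(i := e))"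
  by (simp add: det_joint_def)

lemma det_joint_action: "det_joint A d \<Longrightarrow> (\<lambda>i. d i s) \<in> jacts A"
  by (auto simp: jacts_def det_joint_def det_policy_def PiE_iff)

lemma jp_djoint: "jp (djoint d) s a = (if a = (\<lambda>i. d i s) then 1 else 0)"
proof (cases "a = (\<lambda>i. d i s)")
  case False
  then obtain i where "a i \<noteq> d i s" by auto
  then have "\<exists>j\<in>UNIV. djoint d j s (a j) = 0" by (auto simp: djoint_def detp_def)
  then show ?thesis using False unfolding jp_def by (simp add: prod_zero)
qed (simp add: jp_def djoint_def detp_def)

definition mix :: "('i \<Rightarrow> 's \<Rightarrow> 'a) \<Rightarrow> 'i \<Rightarrow> ('s \<Rightarrow> 'a) \<Rightarrow> real \<Rightarrow> 'i \<Rightarrow> 's \<Rightarrow> 'a \<Rightarrow> real" where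
  "mix d i e \<delta> = (djoint d)(i := (\<lambda>s b. (1 - \<delta>) * detp (d i) s b + \<delta> * detp e s b))"

lemma jp_mix:
  "jp (mix d i e \<delta>) s a = (1 - \<delta>) * jp (djoint d) s a + \<delta> * jp (djoint (d(i := e))) s a"
proof -
  have split: "jp mu s a = mu i s (a i) * (\<Prod>j\<in>UNIV - {i}. mu j s (a j))" for mu
    unfolding jp_def by (rule prod.remove) auto
  have "(\<Prod>j\<in>UNIV - {i}. mu j s (a j)) = (\<Prod>j\<in>UNIV - {i}. djoint d j s (a j))"
    if "\<forall>j. j \<noteq> i \<longrightarrow> mu j = djoint d j" for mu
    using that by (intro prod.cong) auto
  then show ?thesis
    unfolding split [of "mix d i e \<delta>"] split [of "djoint d"] split [of "djoint (d(i := e))"]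
    by (simp add: mix_def djoint_def algebra_simps)
qed

lemma chain_mix:
  "chain A P (mix d i e \<delta>) s t = (1 - \<delta>) * chain A P (djoint d) s t + \<delta> * chain A P (djoint (d(i := e))) s t"
  unfolding chain_def jp_mix sum_mix_weights ..

lemma sweep_unchanged: "sweep A P r \<beta> d ps d' \<Longrightarrow> j \<notin> set ps \<Longrightarrow> d' j = d j"
  by (induction rule: sweep.induct) auto

text \<open>Every update chooses a maximiser in every state, so an agent whose policy a sweep
  leaves unchanged already played maximisers.\<close>
lemma sweep_fixpoint_argmax:
  "sweep A P r \<beta> d ps d' \<Longrightarrow> d' = d \<Longrightarrow> distinct ps \<Longrightarrow> i \<in> set ps \<Longrightarrow>
    d i s \<in> argmaxA A P r \<beta> (djoint d) i s"
proof (induction arbitrary: i rule: sweep.induct)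
  case (sweep_Cons e d j "is" d')
  have "e = d j"
    using sweep_unchanged [OF sweep_Cons.hyps(2), of j] sweep_Cons.prems(1,2) by simp
  then show ?case using sweep_Cons by (cases "i = j") auto
qed simp

lemma sweep_det_joint: "sweep A P r \<beta> d ps d' \<Longrightarrow> det_joint A d \<Longrightarrow> det_joint A d'"
  by (induction rule: sweep.induct) (auto simp: det_joint_def det_policy_def argmaxA_def)

lemma mvmapi_argmax: "mvmapi A P r \<beta> d0 dt \<Longrightarrow> dt i s \<in> argmaxA A P r \<beta> (djoint dt) i s"
  by (induction rule: mvmapi.induct) (auto intro: sweep_fixpoint_argmax)

lemma mvmapi_det_joint: "mvmapi A P r \<beta> d0 dt \<Longrightarrow> det_joint A d0 \<Longrightarrow> det_joint A dt"
  by (induction rule: mvmapi.induct) (auto intro: sweep_det_joint)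

lemma modified_output:
  assumes "modified A P r \<beta> d0 dt" and "det_joint A d0"
  shows "det_joint A dt \<and> (\<forall>i s. dt i s \<in> argmaxA A P r \<beta> (djoint dt) i s)
    \<and> (\<forall>i. \<forall>e\<in>Dset A P r \<beta> dt i. eta A P r (djoint (dt(i := e))) = eta A P r (djoint dt))"
  using assms
proof (induction rule: modified.induct)
  case (modified_done d0 dt)
  then show ?case using mvmapi_argmax mvmapi_det_joint by blast
next
  case (modified_restart d0 dt i e out)
  have "det_joint A dt" using mvmapi_det_joint modified_restart.hyps(1) modified_restart.prems by blast
  then have "det_joint A (dt(i := e))"
    using modified_restart.hyps(3) by (simp add: Dset_def det_joint_upd)
  then show ?case by (rule modified_restart.IH)
qed

lemma self_mem_Dtilde: "det_joint A dt \<Longrightarrow> dt \<in> Dtilde A P r \<beta> dt"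
proof -
  assume "det_joint A dt"
  moreover have "e = dt i" if "dt = dt(i := e)" for i e
    using that by (metis fun_upd_same)
  ultimately show ?thesis unfolding Dtilde_def Dmu_def Dset_def by blast
qed

section \<open>Mean-variance team games\<close>

locale mv_game =
  fixes A :: "'i::finite \<Rightarrow> 'a set"
    and P :: "'s::finite \<Rightarrow> ('i \<Rightarrow> 'a) \<Rightarrow> 's \<Rightarrow> real"
    and r :: "'s \<Rightarrow> ('i \<Rightarrow> 'a) \<Rightarrow> real"
    and \<beta> :: real
  assumes acts: "\<forall>i. finite (A i) \<and> A i \<noteq> {}"
    and P_nonneg: "\<forall>s a s'. a \<in> jacts A \<longrightarrow> 0 \<le> P s a s'"
    and P_sum: "\<forall>s a. a \<in> jacts A \<longrightarrow> (\<Sum>s'\<in>UNIV. P s a s') = 1"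
    and erg: "\<forall>mu\<in>policies A. ergodic (chain A P mu)"
    and beta: "0 \<le> \<beta>"
begin

definition expect :: "('i \<Rightarrow> 's \<Rightarrow> 'a \<Rightarrow> real) \<Rightarrow> ('s \<Rightarrow> ('i \<Rightarrow> 'a) \<Rightarrow> real) \<Rightarrow> real" where
  "expect mu X = (\<Sum>s\<in>UNIV. stat A P mu s * (\<Sum>a\<in>jacts A. jp mu s a * X s a))"

definition advantage :: "('s \<Rightarrow> ('i \<Rightarrow> 'a) \<Rightarrow> real) \<Rightarrow> real \<Rightarrow> ('s \<Rightarrow> real) \<Rightarrow> 's \<Rightarrow> ('i \<Rightarrow> 'a) \<Rightarrow> real" where
  "advantage w c V s a = w s a - c + (\<Sum>t\<in>UNIV. P s a t * V t) - V s"

lemma finite_actions: "finite (A i)"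
  using acts by blast

lemma finite_jacts: "finite (jacts A)"
  unfolding jacts_def by (rule finite_PiE) (auto simp: finite_actions)

lemma policy_nonneg: "mu \<in> policies A \<Longrightarrow> 0 \<le> mu i s b"
  unfolding policies_def is_policy_def by blast

lemma jp_nonneg: "mu \<in> policies A \<Longrightarrow> 0 \<le> jp mu s a"
  unfolding jp_def by (intro prod_nonneg) (auto simp: policy_nonneg)

lemma sum_jp: "mu \<in> policies A \<Longrightarrow> (\<Sum>a\<in>jacts A. jp mu s a) = 1"
  unfolding jacts_def jp_def policies_def is_policy_def
  by (subst prod_sum_PiE [symmetric]) (auto simp: finite_actions)

lemma sum_jp_mult_P:
  "(\<Sum>a\<in>jacts A. jp mu s a * (\<Sum>t\<in>UNIV. P s a t * V t)) = (\<Sum>t\<in>UNIV. chain A P mu s t * V t)"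
  unfolding chain_def
  by (simp add: sum_distrib_left sum_distrib_right mult.assoc) (rule sum.swap)

lemma chain_stochastic:
  assumes mu: "mu \<in> policies A"
  shows "stochastic (chain A P mu)"
proof -
  have "(\<Sum>t\<in>UNIV. chain A P mu s t) = 1" for s
    using sum_jp_mult_P [of mu s "\<lambda>_. 1"] P_sum sum_jp [OF mu] by (simp cong: sum.cong)
  moreover have "0 \<le> chain A P mu s t" for s t
    unfolding chain_def using P_nonneg jp_nonneg [OF mu] by (intro sum_nonneg mult_nonneg_nonneg) auto
  ultimately show ?thesis unfolding stochastic_def by blast
qed

lemma stat_stationary:
  assumes mu: "mu \<in> policies A"
  shows "stationary (chain A P mu) (stat A P mu)"
proof -
  note K = chain_stochastic [OF mu] erg [rule_format, OF mu]
  obtain q where q: "stationary (chain A P mu) q" using exists_stationary [OF K] .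
  show ?thesis
    unfolding stat_def by (rule theI [of _ q]) (use q stationary_unique [OF K q] in blast)+
qed

lemma stat_pos: "mu \<in> policies A \<Longrightarrow> 0 < stat A P mu s"
  by (rule stationary_pos [OF chain_stochastic erg [rule_format] stat_stationary])

lemma stat_sum: "mu \<in> policies A \<Longrightarrow> (\<Sum>s\<in>UNIV. stat A P mu s) = 1"
  by (rule stationaryD(2) [OF stat_stationary])

lemma stat_le_1: "mu \<in> policies A \<Longrightarrow> stat A P mu s \<le> 1"
  using member_le_sum [of s UNIV "stat A P mu"] stat_sum stat_pos by (simp add: order_less_imp_le)

lemma expect_affine:
  assumes mu: "mu \<in> policies A"
  shows "expect mu (\<lambda>s a. x * X s a + y * Y s a + c) = x * expect mu X + y * expect mu Y + c"
proof -
  have affine: "(\<Sum>j\<in>J. p j * (x * f j + y * g j + c)) =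
      x * (\<Sum>j\<in>J. p j * f j) + y * (\<Sum>j\<in>J. p j * g j) + c"
    if "(\<Sum>j\<in>J. p j) = 1" for J and p f g :: "_ \<Rightarrow> real"
  proof -
    have "(\<Sum>j\<in>J. p j * (x * f j + y * g j + c)) = (\<Sum>j\<in>J. x * (p j * f j) + y * (p j * g j) + c * p j)"
      by (intro sum.cong) (simp_all add: algebra_simps)
    also have "\<dots> = x * (\<Sum>j\<in>J. p j * f j) + y * (\<Sum>j\<in>J. p j * g j) + c * (\<Sum>j\<in>J. p j)"
      by (simp only: sum.distrib sum_distrib_left)
    finally show ?thesis using that by simp
  qed
  show ?thesis
    unfolding expect_def affine [OF sum_jp [OF mu]] by (rule affine [OF stat_sum [OF mu]])
qed

lemma eta_eq_expect: "eta A P r mu = expect mu r"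
  unfolding eta_def expect_def ..

lemma expect_sq_dev:
  assumes mu: "mu \<in> policies A"
  shows "expect mu (\<lambda>s a. (r s a - y)\<^sup>2) = zeta A P r mu + (eta A P r mu - y)\<^sup>2"
proof -
  have sq: "(\<lambda>s a. (r s a - z)\<^sup>2) = (\<lambda>s a. 1 * (r s a)\<^sup>2 + (-2 * z) * r s a + z\<^sup>2)" for z
    by (intro ext) (simp add: power2_eq_square algebra_simps)
  have "zeta A P r mu = expect mu (\<lambda>s a. (r s a - eta A P r mu)\<^sup>2)"
    unfolding zeta_def expect_def ..
  then show ?thesis
    unfolding sq expect_affine [OF mu] eta_eq_expect by (simp add: power2_eq_square algebra_simps)
qed

lemma expect_fsa:
  assumes mu': "mu' \<in> policies A"
  shows "expect mu' (fsa A P r \<beta> mu) = Jmv A P r \<beta> mu' - \<beta> * (eta A P r mu' - eta A P r mu)\<^sup>2"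
proof -
  have "fsa A P r \<beta> mu = (\<lambda>s a. 1 * r s a + (-\<beta>) * (r s a - eta A P r mu)\<^sup>2 + 0)"
    by (intro ext) (simp add: fsa_def)
  then have "expect mu' (fsa A P r \<beta> mu) = expect mu' r - \<beta> * expect mu' (\<lambda>s a. (r s a - eta A P r mu)\<^sup>2)"
    by (simp only: expect_affine [OF mu'])
  then show ?thesis
    unfolding expect_sq_dev [OF mu'] Jmv_def eta_eq_expect by (simp add: algebra_simps)
qed

lemma sum_jp_advantage:
  assumes mu: "mu \<in> policies A"
  shows "(\<Sum>a\<in>jacts A. jp mu s a * advantage w c V s a) =
         (\<Sum>a\<in>jacts A. jp mu s a * w s a) - c + (\<Sum>t\<in>UNIV. chain A P mu s t * V t) - V s"
proof -
  have "(\<Sum>a\<in>jacts A. jp mu s a * advantage w c V s a) =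
        (\<Sum>a\<in>jacts A. jp mu s a * w s a + jp mu s a * (\<Sum>t\<in>UNIV. P s a t * V t) - (c + V s) * jp mu s a)"
    unfolding advantage_def by (intro sum.cong) (simp_all add: algebra_simps)
  also have "\<dots> = (\<Sum>a\<in>jacts A. jp mu s a * w s a) + (\<Sum>t\<in>UNIV. chain A P mu s t * V t)
      - (c + V s) * (\<Sum>a\<in>jacts A. jp mu s a)"
    unfolding sum.distrib sum_subtractf sum_jp_mult_P sum_distrib_left [symmetric] ..
  finally show ?thesis by (simp add: sum_jp [OF mu])
qed

text \<open>The potential terms \<open>P V - V\<close> telescope under the stationary distribution.\<close>
lemma expect_advantage:
  assumes mu: "mu \<in> policies A"
  shows "expect mu (advantage w c V) = expect mu w - c"
proof -
  let ?\<pi> = "stat A P mu"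
  have "(\<Sum>s\<in>UNIV. ?\<pi> s * (\<Sum>t\<in>UNIV. chain A P mu s t * V t)) = (\<Sum>t\<in>UNIV. (\<Sum>s\<in>UNIV. ?\<pi> s * chain A P mu s t) * V t)"
    by (simp add: sum_distrib_left sum_distrib_right mult.assoc) (rule sum.swap)
  also have "\<dots> = (\<Sum>t\<in>UNIV. ?\<pi> t * V t)"
    by (simp only: stationaryD(3) [OF stat_stationary [OF mu]])
  finally have telescope: "(\<Sum>s\<in>UNIV. ?\<pi> s * ((\<Sum>t\<in>UNIV. chain A P mu s t * V t) - V s)) = 0"
    by (simp add: right_diff_distrib sum_subtractf)
  let ?W = "\<lambda>s. \<Sum>a\<in>jacts A. jp mu s a * w s a" and ?C = "\<lambda>s. \<Sum>t\<in>UNIV. chain A P mu s t * V t"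
  have "expect mu (advantage w c V) = (\<Sum>s\<in>UNIV. ?\<pi> s * ?W s + ?\<pi> s * (?C s - V s) - c * ?\<pi> s)"
    unfolding expect_def sum_jp_advantage [OF mu] by (intro sum.cong) (simp_all add: algebra_simps)
  also have "\<dots> = expect mu w + (\<Sum>s\<in>UNIV. ?\<pi> s * (?C s - V s)) - c * (\<Sum>s\<in>UNIV. ?\<pi> s)"
    unfolding expect_def by (simp only: sum.distrib sum_subtractf sum_distrib_left)
  finally show ?thesis unfolding telescope stat_sum [OF mu] by simp
qed

lemma exists_zero_mean_advantage:
  assumes mu: "mu \<in> policies A"
  obtains V where "\<forall>s. V s = (\<Sum>a\<in>jacts A. jp mu s a * w s a) - expect mu w + (\<Sum>t\<in>UNIV. chain A P mu s t * V t)"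
    and "\<And>s. (\<Sum>a\<in>jacts A. jp mu s a * advantage w (expect mu w) V s a) = 0"
proof -
  let ?\<pi> = "stat A P mu" and ?g = "\<lambda>s. (\<Sum>a\<in>jacts A. jp mu s a * w s a) - expect mu w"
  have "(\<Sum>s\<in>UNIV. ?\<pi> s * ?g s)
      = (\<Sum>s\<in>UNIV. ?\<pi> s * (\<Sum>a\<in>jacts A. jp mu s a * w s a)) - (\<Sum>s\<in>UNIV. ?\<pi> s) * expect mu w"
    by (simp only: right_diff_distrib sum_subtractf sum_distrib_right)
  then have "(\<Sum>s\<in>UNIV. ?\<pi> s * ?g s) = 0"
    unfolding stat_sum [OF mu] expect_def [symmetric] by simp
  then obtain V where V: "\<forall>s. V s = ?g s + (\<Sum>t\<in>UNIV. chain A P mu s t * V t)"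
    by (rule poisson_solvable [OF chain_stochastic [OF mu] erg [rule_format, OF mu] stat_stationary [OF mu]])
  moreover have "(\<Sum>a\<in>jacts A. jp mu s a * advantage w (expect mu w) V s a) = 0" for s
    unfolding sum_jp_advantage [OF mu] using V [rule_format, of s] by linarith
  ultimately show ?thesis by (rule that)
qed

lemma Af_eq_advantage: "Af A P r \<beta> mu = advantage (fsa A P r \<beta> mu) (Jmv A P r \<beta> mu) (Vf A P r \<beta> mu)"
  unfolding Af_def Qf_def advantage_def by (intro ext) simp

lemma sum_jp_Af:
  assumes mu: "mu \<in> policies A"
  shows "(\<Sum>a\<in>jacts A. jp mu s a * Af A P r \<beta> mu s a) = 0"
proof -
  have J: "expect mu (fsa A P r \<beta> mu) = Jmv A P r \<beta> mu" by (simp add: expect_fsa [OF mu])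
  have "\<exists>V. \<forall>s. V s = fs A P r \<beta> mu s - Jmv A P r \<beta> mu + (\<Sum>t\<in>UNIV. chain A P mu s t * V t)"
    using exists_zero_mean_advantage [OF mu, of "fsa A P r \<beta> mu"] unfolding J fs_def by blast
  then have Vf: "\<forall>s. Vf A P r \<beta> mu s = fs A P r \<beta> mu s - Jmv A P r \<beta> mu + (\<Sum>t\<in>UNIV. chain A P mu s t * Vf A P r \<beta> mu t)"
    unfolding Vf_def by (rule someI_ex)
  show ?thesis
    unfolding Af_eq_advantage sum_jp_advantage [OF mu] fs_def [symmetric]
    using Vf [rule_format, of s] by linarith
qed

lemma Jmv_diff:
  assumes mu': "mu' \<in> policies A"
  shows "Jmv A P r \<beta> mu' - Jmv A P r \<beta> mu = expect mu' (Af A P r \<beta> mu) + \<beta> * (eta A P r mu' - eta A P r mu)\<^sup>2"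
  unfolding Af_eq_advantage expect_advantage [OF mu'] expect_fsa [OF mu'] by simp

lemma djoint_policy: "det_joint A d \<Longrightarrow> djoint d \<in> policies A"
  by (auto simp: policies_def is_policy_def djoint_def detp_def det_joint_def det_policy_def
      finite_actions)

lemma sum_jp_djoint:
  assumes "det_joint A d"
  shows "(\<Sum>a\<in>jacts A. jp (djoint d) s a * X a) = X (\<lambda>i. d i s)"
  using det_joint_action [OF assms] finite_jacts
  by (simp add: jp_djoint if_distrib [of "\<lambda>c. c * _"] cong: if_cong)

lemma expect_djoint:
  "det_joint A d \<Longrightarrow> expect (djoint d) X = (\<Sum>s\<in>UNIV. stat A P (djoint d) s * X s (\<lambda>i. d i s))"
  unfolding expect_def by (simp add: sum_jp_djoint)

lemma Af_djoint_self: "det_joint A d \<Longrightarrow> Af A P r \<beta> (djoint d) s (\<lambda>i. d i s) = 0"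
  using sum_jp_Af [OF djoint_policy] by (simp add: sum_jp_djoint)

lemma expA_djoint:
  assumes d: "det_joint A d" and b: "b \<in> A i"
  shows "expA A P r \<beta> (djoint d) i s b = Af A P r \<beta> (djoint d) s ((\<lambda>j. d j s)(i := b))"
proof -
  let ?a = "(\<lambda>j. d j s)(i := b)"
  have weight: "(\<Prod>j\<in>UNIV - {i}. djoint d j s (a j)) = (if a = ?a then 1 else 0)" if "a i = b" for a
  proof (cases "a = ?a")
    case False
    with that obtain j where "j \<noteq> i" "a j \<noteq> d j s" by (auto simp: fun_eq_iff split: if_splits)
    then have "\<exists>j\<in>UNIV - {i}. djoint d j s (a j) = 0" by (auto simp: djoint_def detp_def)
    then show ?thesis using False by (simp add: prod_zero)
  qed (simp add: djoint_def detp_def)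
  have "expA A P r \<beta> (djoint d) i s b
      = (\<Sum>a\<in>{a \<in> jacts A. a i = b}. if a = ?a then Af A P r \<beta> (djoint d) s a else 0)"
    unfolding expA_def by (intro sum.cong refl) (use weight in \<open>auto simp del: fun_upd_apply\<close>)
  also have "\<dots> = Af A P r \<beta> (djoint d) s ?a"
  proof -
    have "?a \<in> {a \<in> jacts A. a i = b}"
      using det_joint_action [OF d, of s] b by (auto simp: jacts_def PiE_iff)
    moreover have "finite {a \<in> jacts A. a i = b}" using finite_jacts by simp
    ultimately show ?thesis by (subst sum.delta) simp_all
  qed
  finally show ?thesis .
qed

lemma expA_djoint_self: "det_joint A d \<Longrightarrow> expA A P r \<beta> (djoint d) i s (d i s) = 0"
proof -
  assume d: "det_joint A d"
  have "(\<lambda>j. d j s)(i := d i s) = (\<lambda>j. d j s)" by auto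
  then show ?thesis
    using expA_djoint [OF d, of "d i s" i s] Af_djoint_self [OF d, of s] d
    by (simp add: det_joint_def det_policy_def)
qed

lemma argmaxA_eq:
  "b \<in> argmaxA A P r \<beta> mu i s \<Longrightarrow> b' \<in> argmaxA A P r \<beta> mu i s \<Longrightarrow>
    expA A P r \<beta> mu i s b = expA A P r \<beta> mu i s b'"
  unfolding argmaxA_def by (auto intro: order_antisym)

subsection \<open>Optimality of the pruned policy space\<close>

lemma Jmv_Dmu:
  assumes dt: "det_joint A dt"
    and argmax: "\<forall>i s. dt i s \<in> argmaxA A P r \<beta> (djoint dt) i s"
    and eta_eq: "\<forall>i. \<forall>e\<in>Dset A P r \<beta> dt i. eta A P r (djoint (dt(i := e))) = eta A P r (djoint dt)"
    and d: "d \<in> Dmu A P r \<beta> dt"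
  shows "Jmv A P r \<beta> (djoint d) = Jmv A P r \<beta> (djoint dt)"
proof -
  obtain i e where d_eq: "d = dt(i := e)" and e: "e \<in> Dset A P r \<beta> dt i"
    using d unfolding Dmu_def by blast
  have e_det: "det_policy A i e" and e_max: "\<forall>s. e s \<in> argmaxA A P r \<beta> (djoint dt) i s"
    using e unfolding Dset_def by auto
  have d_det: "det_joint A d" using dt e_det d_eq by (simp add: det_joint_upd)
  \<comment> \<open>Maximisers share the value of \<open>dt i s\<close>, which is \<open>0\<close>, so \<open>d\<close> has zero advantage everywhere.\<close>
  have "Af A P r \<beta> (djoint dt) s (\<lambda>j. d j s) = 0" for s
  proof -
    have "(\<lambda>j. d j s) = (\<lambda>j. dt j s)(i := e s)" using d_eq by auto
    then have "Af A P r \<beta> (djoint dt) s (\<lambda>j. d j s) = expA A P r \<beta> (djoint dt) i s (e s)"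
      using expA_djoint [OF dt] e_det by (simp add: det_policy_def)
    also have "\<dots> = expA A P r \<beta> (djoint dt) i s (dt i s)"
      using e_max argmax by (blast intro: argmaxA_eq)
    finally show ?thesis using expA_djoint_self [OF dt] by simp
  qed
  then have "expect (djoint d) (Af A P r \<beta> (djoint dt)) = 0"
    by (simp add: expect_djoint [OF d_det])
  then show ?thesis
    using Jmv_diff [OF djoint_policy [OF d_det], of "djoint dt"] eta_eq e d_eq by simp
qed

lemma exists_greedy_det:
  fixes X :: "'s \<Rightarrow> ('i \<Rightarrow> 'a) \<Rightarrow> real"
  obtains d where "det_joint A d" and "\<forall>s. \<forall>a\<in>jacts A. X s a \<le> X s (\<lambda>i. d i s)"
proof -
  have "jacts A \<noteq> {}"
    using acts unfolding jacts_def by (simp add: PiE_eq_empty_iff)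
  have "\<forall>s. \<exists>a. a \<in> jacts A \<and> (\<forall>a'\<in>jacts A. X s a' \<le> X s a)"
    using finite_has_max [OF finite_jacts \<open>jacts A \<noteq> {}\<close>] by metis
  then have "\<exists>g. \<forall>s. g s \<in> jacts A \<and> (\<forall>a'\<in>jacts A. X s a' \<le> X s (g s))"
    by (rule choice)
  then obtain g where g: "\<forall>s. g s \<in> jacts A \<and> (\<forall>a'\<in>jacts A. X s a' \<le> X s (g s))" ..
  have "det_joint A (\<lambda>i s. g s i)"
    using g by (auto simp: det_joint_def det_policy_def jacts_def)
  then show ?thesis using g that by auto
qed

lemma expect_nonpos:
  "mu \<in> policies A \<Longrightarrow> (\<forall>s. \<forall>a\<in>jacts A. X s a \<le> 0) \<Longrightarrow> expect mu X \<le> 0"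
proof -
  assume mu: "mu \<in> policies A" and X: "\<forall>s. \<forall>a\<in>jacts A. X s a \<le> 0"
  have "(\<Sum>a\<in>jacts A. jp mu s a * X s a) \<le> 0" for s
    using X jp_nonneg [OF mu] by (intro sum_nonpos mult_nonneg_nonpos) auto
  then show ?thesis
    unfolding expect_def using stat_pos [OF mu]
    by (simp add: sum_nonpos mult_nonneg_nonpos order_less_imp_le)
qed

lemma expect_djoint_nonpos_imp_eq_0:
  assumes d: "det_joint A d" and nonneg: "\<forall>s. 0 \<le> X s (\<lambda>i. d i s)"
    and "expect (djoint d) X \<le> 0"
  shows "X s (\<lambda>i. d i s) = 0"
proof -
  let ?\<pi> = "stat A P (djoint d)"
  have pos: "0 < ?\<pi> s" for s by (rule stat_pos [OF djoint_policy [OF d]])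
  have terms_nonneg: "\<forall>s\<in>UNIV. 0 \<le> ?\<pi> s * X s (\<lambda>i. d i s)"
    using nonneg pos by (simp add: order_less_imp_le)
  moreover have "(\<Sum>s\<in>UNIV. ?\<pi> s * X s (\<lambda>i. d i s)) \<le> 0"
    using assms(3) by (simp add: expect_djoint [OF d])
  ultimately have "(\<Sum>s\<in>UNIV. ?\<pi> s * X s (\<lambda>i. d i s)) = 0"
    by (meson order.antisym sum_nonneg)
  then have "?\<pi> s * X s (\<lambda>i. d i s) = 0"
    using terms_nonneg by (simp add: sum_nonneg_eq_0_iff)
  then show ?thesis using pos [of s] by simp
qed

text \<open>Policy improvement for the long-run average of a fixed reward \<open>w\<close>: take the advantage \<open>G\<close>
  of the best deterministic policy \<open>dst\<close>. The greedy policy for \<open>G\<close> cannot do better than \<open>dst\<close>,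
  which forces \<open>G \<le> 0\<close> everywhere, and then no policy does better than \<open>dst\<close>.\<close>
lemma expect_le_best_det:
  assumes dst: "det_joint A dst"
    and best: "\<forall>d. det_joint A d \<longrightarrow> expect (djoint d) w \<le> expect (djoint dst) w"
    and mu: "mu \<in> policies A"
  shows "expect mu w \<le> expect (djoint dst) w"
proof -
  let ?c = "expect (djoint dst) w"
  obtain V where V: "\<And>s. (\<Sum>a\<in>jacts A. jp (djoint dst) s a * advantage w ?c V s a) = 0"
    using exists_zero_mean_advantage [OF djoint_policy [OF dst]] by blast
  define G where "G = advantage w ?c V"
  have G_dst: "G s (\<lambda>i. dst i s) = 0" for s
    using V [of s] unfolding G_def sum_jp_djoint [OF dst] .
  obtain d where d: "det_joint A d" and greedy: "\<forall>s. \<forall>a\<in>jacts A. G s a \<le> G s (\<lambda>i. d i s)"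
    using exists_greedy_det .
  have "\<forall>s. 0 \<le> G s (\<lambda>i. d i s)"
    using greedy det_joint_action [OF dst] G_dst by (metis (no_types, lifting))
  moreover have "expect (djoint d) G \<le> 0"
    using best d unfolding G_def expect_advantage [OF djoint_policy [OF d]] by simp
  ultimately have "G s (\<lambda>i. d i s) = 0" for s by (rule expect_djoint_nonpos_imp_eq_0 [OF d])
  then have "expect mu G \<le> 0" using greedy by (intro expect_nonpos [OF mu]) auto
  then show ?thesis unfolding G_def expect_advantage [OF mu] by simp
qed

lemma finite_det_joint: "finite {d :: 'i \<Rightarrow> 's \<Rightarrow> 'a. det_joint A d}"
proof -
  have "{d. det_joint A d} = Pi\<^sub>E UNIV (\<lambda>i. Pi\<^sub>E UNIV (\<lambda>s::'s. A i))"
    by (auto simp: det_joint_def det_policy_def PiE_iff)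
  then show ?thesis by (simp add: finite_PiE finite_actions)
qed

lemma exists_best_det:
  fixes F :: "('i \<Rightarrow> 's \<Rightarrow> 'a) \<Rightarrow> real"
  obtains d where "det_joint A d" and "\<And>d'. det_joint A d' \<Longrightarrow> F d' \<le> F d"
proof -
  have "det_joint A (\<lambda>i s. SOME b. b \<in> A i)"
    using acts by (simp add: det_joint_def det_policy_def some_in_eq)
  then have "{d. det_joint A d} \<noteq> {}" by blast
  then obtain d where "d \<in> {d. det_joint A d}" and "\<forall>d'\<in>{d. det_joint A d}. F d' \<le> F d"
    by (rule finite_has_max [OF finite_det_joint])
  then show ?thesis using that by simp
qed

lemma exists_optimal_det:
  obtains dm where "det_joint A dm" and "\<forall>mu\<in>policies A. Jmv A P r \<beta> mu \<le> Jmv A P r \<beta> (djoint dm)"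
proof -
  obtain dm where dm: "det_joint A dm"
    and dm_max: "\<And>d. det_joint A d \<Longrightarrow> Jmv A P r \<beta> (djoint d) \<le> Jmv A P r \<beta> (djoint dm)"
    using exists_best_det [of "\<lambda>d. Jmv A P r \<beta> (djoint d)"] by blast
  \<comment> \<open>\<open>J mu = expect mu (f^mu)\<close>, and for the fixed reward \<open>f^mu\<close> a deterministic policy is optimal.\<close>
  have "Jmv A P r \<beta> mu \<le> Jmv A P r \<beta> (djoint dm)" if mu: "mu \<in> policies A" for mu
  proof -
    let ?w = "fsa A P r \<beta> mu"
    obtain dst where dst: "det_joint A dst"
      and dst_max: "\<And>d. det_joint A d \<Longrightarrow> expect (djoint d) ?w \<le> expect (djoint dst) ?w"
      using exists_best_det [of "\<lambda>d. expect (djoint d) ?w"] by blast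
    have "Jmv A P r \<beta> mu = expect mu ?w" by (simp add: expect_fsa [OF mu])
    also have "\<dots> \<le> expect (djoint dst) ?w" using expect_le_best_det [OF dst _ mu] dst_max by blast
    also have "\<dots> \<le> Jmv A P r \<beta> (djoint dst)"
      using beta by (simp add: expect_fsa [OF djoint_policy [OF dst]])
    also have "\<dots> \<le> Jmv A P r \<beta> (djoint dm)" by (rule dm_max [OF dst])
    finally show ?thesis .
  qed
  then show ?thesis using dm that by blast
qed

subsection \<open>Strict local Nash equilibrium\<close>

lemma mix_policy:
  assumes d: "det_joint A d" and e: "det_policy A i e" and \<delta>: "0 \<le> \<delta>" "\<delta> \<le> 1"
  shows "mix d i e \<delta> \<in> policies A"
proof -
  have "d i s \<in> A i" "e s \<in> A i" for s
    using d e by (auto simp: det_joint_def det_policy_def)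
  then have "is_policy A i (\<lambda>s b. (1 - \<delta>) * detp (d i) s b + \<delta> * detp e s b)"
    using \<delta> by (auto simp: is_policy_def detp_def sum.distrib finite_actions simp flip: sum_distrib_left)
  then show ?thesis
    using djoint_policy [OF d] by (auto simp: mix_def policies_def)
qed

lemma expect_mix:
  assumes d: "det_joint A d" and e: "det_policy A i e"
  shows "expect (mix d i e \<delta>) X = (\<Sum>s\<in>UNIV. stat A P (mix d i e \<delta>) s *
            ((1 - \<delta>) * X s (\<lambda>j. d j s) + \<delta> * X s ((\<lambda>j. d j s)(i := e s))))"
proof -
  have "(\<lambda>j. (d(i := e)) j s) = (\<lambda>j. d j s)(i := e s)" for s by auto
  then have "(\<Sum>a\<in>jacts A. jp (mix d i e \<delta>) s a * X s a) =
      (1 - \<delta>) * X s (\<lambda>j. d j s) + \<delta> * X s ((\<lambda>j. d j s)(i := e s))" for s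
    unfolding jp_mix sum_mix_weights sum_jp_djoint [OF d] sum_jp_djoint [OF det_joint_upd [OF d e]]
    by simp
  then show ?thesis unfolding expect_def by simp
qed

lemma argmaxA_gap:
  obtains \<gamma> where "0 < \<gamma>"
    and "\<And>i s b b'. b \<in> A i \<Longrightarrow> b \<notin> argmaxA A P r \<beta> mu i s \<Longrightarrow> b' \<in> argmaxA A P r \<beta> mu i s \<Longrightarrow>
           expA A P r \<beta> mu i s b + \<gamma> \<le> expA A P r \<beta> mu i s b'"
proof -
  let ?E = "expA A P r \<beta> mu"
  define gaps where "gaps = {?E i s b' - ?E i s b | i s b b'.
      b \<in> A i \<and> b \<notin> argmaxA A P r \<beta> mu i s \<and> b' \<in> argmaxA A P r \<beta> mu i s}"
  have "gaps \<subseteq> (\<lambda>(i, s, b, b'). ?E i s b' - ?E i s b) ` (UNIV \<times> UNIV \<times> (\<Union>i. A i) \<times> (\<Union>i. A i))"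
    unfolding gaps_def argmaxA_def by force
  then have "finite (insert 1 gaps)"
    by (auto intro: finite_subset simp: finite_actions)
  moreover have "0 < g" if "g \<in> gaps" for g
  proof -
    obtain i s b b' where g: "g = ?E i s b' - ?E i s b" and b: "b \<in> A i" "b \<notin> argmaxA A P r \<beta> mu i s"
      and b': "b' \<in> argmaxA A P r \<beta> mu i s"
      using \<open>g \<in> gaps\<close> unfolding gaps_def by blast
    obtain b'' where "b'' \<in> A i" "?E i s b < ?E i s b''"
      using b unfolding argmaxA_def by (auto simp: not_le)
    moreover have "?E i s b'' \<le> ?E i s b'" using b' \<open>b'' \<in> A i\<close> unfolding argmaxA_def by blast
    ultimately show ?thesis using g by simp
  qed
  ultimately have "0 < Min (insert 1 gaps)" by (subst Min_gr_iff) auto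
  moreover have "Min (insert 1 gaps) \<le> ?E i s b' - ?E i s b"
    if "b \<in> A i" "b \<notin> argmaxA A P r \<beta> mu i s" "b' \<in> argmaxA A P r \<beta> mu i s" for i s b b'
    using \<open>finite (insert 1 gaps)\<close> that by (intro Min_le) (auto simp: gaps_def)
  ultimately show ?thesis by (intro that [of "Min (insert 1 gaps)"]) force+
qed

lemma stat_mix_lower_bound:
  assumes dt: "det_joint A dt"
  obtains \<kappa> where "0 < \<kappa>"
    and "\<And>i e \<delta> s. det_policy A i e \<Longrightarrow> 0 \<le> \<delta> \<Longrightarrow> \<delta> \<le> 1/2 \<Longrightarrow> \<kappa> \<le> stat A P (mix dt i e \<delta>) s"
proof -
  note dt_pol = djoint_policy [OF dt]
  obtain \<kappa> where "0 < \<kappa>"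
    and \<kappa>: "\<And>N q s. \<forall>s t. chain A P (djoint dt) s t \<le> 2 * N s t \<Longrightarrow> stationary N q \<Longrightarrow> \<kappa> \<le> q s"
    using stationary_lower_bound [OF chain_stochastic [OF dt_pol] erg [rule_format, OF dt_pol]] by blast
  have "\<kappa> \<le> stat A P (mix dt i e \<delta>) s"
    if e: "det_policy A i e" and \<delta>: "0 \<le> \<delta>" "\<delta> \<le> 1/2" for i e \<delta> s
  proof (rule \<kappa>)
    show "stationary (chain A P (mix dt i e \<delta>)) (stat A P (mix dt i e \<delta>))"
      using mix_policy [OF dt e] \<delta> by (intro stat_stationary) simp
    have "0 \<le> chain A P (djoint (dt(i := e))) s t" for s t
      using chain_stochastic [OF djoint_policy [OF det_joint_upd [OF dt e]]] by (simp add: stochastic_def)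
    moreover have "0 \<le> chain A P (djoint dt) s t" for s t
      using chain_stochastic [OF dt_pol] by (simp add: stochastic_def)
    ultimately have "0 \<le> (1 - 2 * \<delta>) * chain A P (djoint dt) s t + 2 * \<delta> * chain A P (djoint (dt(i := e))) s t"
      for s t using \<delta> by (intro add_nonneg_nonneg mult_nonneg_nonneg) auto
    then show "\<forall>s t. chain A P (djoint dt) s t \<le> 2 * chain A P (mix dt i e \<delta>) s t"
      unfolding chain_mix by (simp add: algebra_simps)
  qed
  then show ?thesis by (rule that [OF \<open>0 < \<kappa>\<close>])
qed

lemma expect_mix_Af:
  assumes d: "det_joint A d" and e: "det_policy A i e"
  shows "expect (mix d i e \<delta>) (Af A P r \<beta> (djoint d))
    = \<delta> * (\<Sum>s\<in>UNIV. stat A P (mix d i e \<delta>) s * expA A P r \<beta> (djoint d) i s (e s))"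
proof -
  have "Af A P r \<beta> (djoint d) s ((\<lambda>j. d j s)(i := e s)) = expA A P r \<beta> (djoint d) i s (e s)" for s
    using expA_djoint [OF d] e by (simp add: det_policy_def)
  then have "expect (mix d i e \<delta>) (Af A P r \<beta> (djoint d))
      = (\<Sum>s\<in>UNIV. \<delta> * (stat A P (mix d i e \<delta>) s * expA A P r \<beta> (djoint d) i s (e s)))"
    unfolding expect_mix [OF d e] Af_djoint_self [OF d] by (intro sum.cong) simp_all
  then show ?thesis by (simp only: sum_distrib_left)
qed

lemma expect_mix_Af_le:
  assumes dt: "det_joint A dt" and argmax: "\<forall>i s. dt i s \<in> argmaxA A P r \<beta> (djoint dt) i s"
    and e: "det_policy A i e" and \<delta>: "0 \<le> \<delta>" "\<delta> \<le> 1"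
    and s0: "expA A P r \<beta> (djoint dt) i s0 (e s0) \<le> - \<gamma>" and "0 \<le> \<gamma>"
    and \<kappa>: "\<kappa> \<le> stat A P (mix dt i e \<delta>) s0"
  shows "expect (mix dt i e \<delta>) (Af A P r \<beta> (djoint dt)) \<le> - \<delta> * (\<kappa> * \<gamma>)"
proof -
  let ?mu = "mix dt i e \<delta>"
  have mu: "?mu \<in> policies A" by (rule mix_policy [OF dt e \<delta>])
  have e_A: "e s \<in> A i" for s using e by (simp add: det_policy_def)
  have "(\<Sum>s\<in>UNIV. stat A P ?mu s * expA A P r \<beta> (djoint dt) i s (e s)) \<le> - (\<kappa> * \<gamma>)"
  proof (rule sum_nonpos_le_single_term)
    show "\<forall>s\<in>UNIV. 0 \<le> stat A P ?mu s \<and> expA A P r \<beta> (djoint dt) i s (e s) \<le> 0"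
      using stat_pos [OF mu] argmax e_A expA_djoint_self [OF dt]
      by (auto simp: argmaxA_def order_less_imp_le)
  qed (use s0 \<kappa> \<open>0 \<le> \<gamma>\<close> in auto)
  then show ?thesis
    unfolding expect_mix_Af [OF dt e] using mult_left_mono [of _ _ \<delta>] \<delta> by fastforce
qed

text \<open>The mean reward moves only linearly in \<open>\<delta>\<close>, so the variance penalty changes at second order.\<close>
lemma eta_mix_bound:
  assumes dt: "det_joint A dt"
  obtains C where "\<And>i e \<delta>. det_policy A i e \<Longrightarrow> 0 \<le> \<delta> \<Longrightarrow> \<delta> \<le> 1 \<Longrightarrow>
    \<bar>eta A P r (mix dt i e \<delta>) - eta A P r (djoint dt)\<bar> \<le> \<delta> * C"
proof -
  let ?\<eta>0 = "eta A P r (djoint dt)"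
  obtain V where V: "\<And>s. (\<Sum>a\<in>jacts A. jp (djoint dt) s a * advantage r ?\<eta>0 V s a) = 0"
    using exists_zero_mean_advantage [OF djoint_policy [OF dt]] unfolding eta_eq_expect by blast
  define G where "G = advantage r ?\<eta>0 V"
  have G_dt: "G s (\<lambda>j. dt j s) = 0" for s
    using V [of s] unfolding G_def sum_jp_djoint [OF dt] .
  define C where "C = (\<Sum>s\<in>UNIV. \<Sum>a\<in>jacts A. \<bar>G s a\<bar>)"
  have "\<bar>eta A P r (mix dt i e \<delta>) - ?\<eta>0\<bar> \<le> \<delta> * C"
    if e: "det_policy A i e" and \<delta>: "0 \<le> \<delta>" "\<delta> \<le> 1" for i e \<delta>
  proof -
    let ?mu = "mix dt i e \<delta>"
    let ?h = "\<lambda>s. G s ((\<lambda>j. dt j s)(i := e s))"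
    have mu: "?mu \<in> policies A" by (rule mix_policy [OF dt e \<delta>])
    have "eta A P r ?mu - ?\<eta>0 = expect ?mu G"
      unfolding G_def expect_advantage [OF mu] eta_eq_expect ..
    also have "\<dots> = \<delta> * (\<Sum>s\<in>UNIV. stat A P ?mu s * ?h s)"
      unfolding expect_mix [OF dt e] G_dt by (simp add: sum_distrib_left ac_simps)
    finally have "\<bar>eta A P r ?mu - ?\<eta>0\<bar> = \<delta> * \<bar>\<Sum>s\<in>UNIV. stat A P ?mu s * ?h s\<bar>"
      using \<delta> by (simp add: abs_mult)
    also have "\<bar>\<Sum>s\<in>UNIV. stat A P ?mu s * ?h s\<bar> \<le> (\<Sum>s\<in>UNIV. \<bar>?h s\<bar>)"
      using stat_pos [OF mu] stat_le_1 [OF mu] by (intro abs_weighted_sum_le) (simp add: order_less_imp_le)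
    also have "\<dots> \<le> C"
      unfolding C_def
    proof (intro sum_mono member_le_sum)
      fix s
      have "(\<lambda>j. dt j s)(i := e s) = (\<lambda>j. (dt(i := e)) j s)" by auto
      then show "(\<lambda>j. dt j s)(i := e s) \<in> jacts A"
        using det_joint_action [OF det_joint_upd [OF dt e], of s] by (simp only:)
    qed (simp_all add: finite_jacts)
    finally show ?thesis using \<delta> by (simp add: mult_left_mono)
  qed
  then show ?thesis by (rule that)
qed

lemma not_Dset_if_Dtilde:
  "dt(i := e) \<in> Dtilde A P r \<beta> dt \<Longrightarrow> e \<notin> Dset A P r \<beta> dt i"
  unfolding Dtilde_def Dmu_def by blast

text \<open>Moving agent \<open>i\<close> towards a policy outside \<open>D_i\<close> costs at least \<open>\<delta> \<kappa> \<gamma>\<close> in the advantage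
  term, while the variance penalty can only gain \<open>\<beta> (\<delta> C)\<^sup>2\<close>.\<close>
lemma strict_local_nash:
  assumes dt: "det_joint A dt" and argmax: "\<forall>i s. dt i s \<in> argmaxA A P r \<beta> (djoint dt) i s"
  shows "\<exists>\<delta>b. 0 < \<delta>b \<and> \<delta>b \<le> 1 \<and>
    (\<forall>\<delta>. 0 < \<delta> \<and> \<delta> \<le> \<delta>b \<longrightarrow>
      (\<forall>i e. det_policy A i e \<and> e \<noteq> dt i \<and> dt(i := e) \<in> Dtilde A P r \<beta> dt \<longrightarrow>
        Jmv A P r \<beta> (mix dt i e \<delta>) < Jmv A P r \<beta> (djoint dt)))"
proof -
  let ?E = "expA A P r \<beta> (djoint dt)"
  obtain \<kappa> where "0 < \<kappa>"
    and \<kappa>: "\<And>i e \<delta> s. det_policy A i e \<Longrightarrow> 0 \<le> \<delta> \<Longrightarrow> \<delta> \<le> 1/2 \<Longrightarrow> \<kappa> \<le> stat A P (mix dt i e \<delta>) s"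
    by (rule stat_mix_lower_bound [OF dt]) blast
  obtain \<gamma> where "0 < \<gamma>"
    and \<gamma>: "\<And>i s b b'. b \<in> A i \<Longrightarrow> b \<notin> argmaxA A P r \<beta> (djoint dt) i s \<Longrightarrow>
             b' \<in> argmaxA A P r \<beta> (djoint dt) i s \<Longrightarrow> ?E i s b + \<gamma> \<le> ?E i s b'"
    by (rule argmaxA_gap) blast
  obtain C where C: "\<And>i e \<delta>. det_policy A i e \<Longrightarrow> 0 \<le> \<delta> \<Longrightarrow> \<delta> \<le> 1 \<Longrightarrow>
      \<bar>eta A P r (mix dt i e \<delta>) - eta A P r (djoint dt)\<bar> \<le> \<delta> * C"
    by (rule eta_mix_bound [OF dt]) blast
  define X where "X = \<beta> * C\<^sup>2"
  have "0 \<le> X" unfolding X_def using beta by simp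
  define \<delta>b where "\<delta>b = min (1/2) (\<kappa> * \<gamma> / (X + 1))"
  have "0 < \<delta>b" unfolding \<delta>b_def using \<open>0 < \<kappa>\<close> \<open>0 < \<gamma>\<close> \<open>0 \<le> X\<close> by simp
  moreover have "\<delta>b \<le> 1" unfolding \<delta>b_def by simp
  moreover have "Jmv A P r \<beta> (mix dt i e \<delta>) < Jmv A P r \<beta> (djoint dt)"
    if \<delta>: "0 < \<delta>" "\<delta> \<le> \<delta>b" and e: "det_policy A i e" "e \<noteq> dt i" "dt(i := e) \<in> Dtilde A P r \<beta> dt"
    for \<delta> i e
  proof -
    let ?mu = "mix dt i e \<delta>" and ?\<Delta> = "eta A P r (mix dt i e \<delta>) - eta A P r (djoint dt)"
    have \<delta>_half: "\<delta> \<le> 1/2" using \<delta> unfolding \<delta>b_def by simp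
    have mu: "?mu \<in> policies A" using mix_policy [OF dt e(1)] \<delta> \<delta>_half by simp
    obtain s0 where s0: "e s0 \<notin> argmaxA A P r \<beta> (djoint dt) i s0"
      using not_Dset_if_Dtilde [OF e(3)] e(1,2) unfolding Dset_def by blast
    have "?E i s0 (e s0) \<le> - \<gamma>"
      using \<gamma> [OF _ s0 argmax [rule_format]] e(1) expA_djoint_self [OF dt] by (simp add: det_policy_def)
    then have first: "expect ?mu (Af A P r \<beta> (djoint dt)) \<le> - \<delta> * (\<kappa> * \<gamma>)"
      using expect_mix_Af_le [OF dt argmax e(1)] \<kappa> [OF e(1)] \<delta> \<delta>_half \<open>0 < \<gamma>\<close> by simp
    have "\<bar>?\<Delta>\<bar> \<le> \<delta> * C" using C [OF e(1), of \<delta>] \<delta> \<delta>_half by simp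
    from mult_square_le_of_abs_le [OF this beta]
    have second: "\<beta> * ?\<Delta>\<^sup>2 \<le> \<delta>\<^sup>2 * X" unfolding X_def by (simp add: power_mult_distrib ac_simps)
    have "\<delta> * (X + 1) \<le> \<kappa> * \<gamma>"
      using \<delta> \<open>0 \<le> X\<close> unfolding \<delta>b_def by (simp add: field_simps)
    from first_order_dominates [OF \<open>0 < \<delta>\<close> this first second] show ?thesis
      using Jmv_diff [OF mu, of "djoint dt"] by simp
  qed
  ultimately show ?thesis by blast
qed

end

theorem theorem4:
  fixes A :: "'i::{finite,linorder} \<Rightarrow> 'a set"
    and P :: "'s::finite \<Rightarrow> ('i \<Rightarrow> 'a) \<Rightarrow> 's \<Rightarrow> real"
    and r :: "'s \<Rightarrow> ('i \<Rightarrow> 'a) \<Rightarrow> real"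
    and \<beta> :: real
    and d0 dt :: "'i \<Rightarrow> 's \<Rightarrow> 'a"
  assumes acts: "\<forall>i. finite (A i) \<and> A i \<noteq> {}"
    and P_nonneg: "\<forall>s a s'. a \<in> jacts A \<longrightarrow> 0 \<le> P s a s'"
    and P_sum: "\<forall>s a. a \<in> jacts A \<longrightarrow> (\<Sum>s'\<in>UNIV. P s a s') = 1"
    and erg: "\<forall>mu\<in>policies A. ergodic (chain A P mu)"
    and beta: "0 \<le> \<beta>"
    and init: "det_joint A d0"
    and out: "modified A P r \<beta> d0 dt"
  shows "(\<forall>d\<in>Dmu A P r \<beta> dt. Jmv A P r \<beta> (djoint dt) = Jmv A P r \<beta> (djoint d))
       \<and> (\<exists>dstar\<in>Dtilde A P r \<beta> dt. \<forall>mu\<in>policies A.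
              Jmv A P r \<beta> mu \<le> Jmv A P r \<beta> (djoint dstar))
       \<and> (\<exists>\<delta>b. 0 < \<delta>b \<and> \<delta>b \<le> 1 \<and>
            (\<forall>\<delta>. 0 < \<delta> \<and> \<delta> \<le> \<delta>b \<longrightarrow>
              (\<forall>i e. det_policy A i e \<and> e \<noteq> dt i \<and> dt(i := e) \<in> Dtilde A P r \<beta> dt \<longrightarrow>
                 Jmv A P r \<beta> ((djoint dt)(i := (\<lambda>s b. (1 - \<delta>) * detp (dt i) s b + \<delta> * detp e s b)))
                   < Jmv A P r \<beta> (djoint dt))))"
proof -
  interpret mv_game A P r \<beta> using acts P_nonneg P_sum erg beta by unfold_locales
  have dt: "det_joint A dt" and argmax: "\<forall>i s. dt i s \<in> argmaxA A P r \<beta> (djoint dt) i s"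
    and eta_eq: "\<forall>i. \<forall>e\<in>Dset A P r \<beta> dt i. eta A P r (djoint (dt(i := e))) = eta A P r (djoint dt)"
    using modified_output [OF out init] by blast+
  have equal_on_Dmu: "\<forall>d\<in>Dmu A P r \<beta> dt. Jmv A P r \<beta> (djoint dt) = Jmv A P r \<beta> (djoint d)"
    using Jmv_Dmu [OF dt argmax eta_eq] by simp
  obtain dm where dm: "det_joint A dm" and dm_opt: "\<forall>mu\<in>policies A. Jmv A P r \<beta> mu \<le> Jmv A P r \<beta> (djoint dm)"
    by (rule exists_optimal_det)
  \<comment> \<open>If the optimum \<open>dm\<close> was pruned, then \<open>dt\<close>, which is never pruned, attains the same value.\<close>
  have optimal_in_Dtilde:
    "\<exists>dstar\<in>Dtilde A P r \<beta> dt. \<forall>mu\<in>policies A. Jmv A P r \<beta> mu \<le> Jmv A P r \<beta> (djoint dstar)"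
  proof (cases "dm \<in> Dmu A P r \<beta> dt")
    case True
    then have "Jmv A P r \<beta> (djoint dm) = Jmv A P r \<beta> (djoint dt)" using equal_on_Dmu by simp
    then show ?thesis using dm_opt self_mem_Dtilde [OF dt] by auto
  next
    case False
    then show ?thesis using dm dm_opt unfolding Dtilde_def by blast
  qed
  with equal_on_Dmu show ?thesis
    using strict_local_nash [OF dt argmax] unfolding mix_def by (intro conjI)
qed

end
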